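(* Let $R=R(\dot R,S,L)$ be an extended affine root system with $\Lambda=\langle S\rangle$, let $U$ be a subgroup of $\langle R^0\rangle$ and $T=(\dot R+U)\cap R^\times$. Then $\tilde R_T$ is a closed canonical subsystem of $R$ provided one of the following holds: (1) $\dot R$ is not of type $A_1$ or $B_\ell$; (2) $\dot R$ is of type $A_1$, and either $S$ is a lattice or $\mathrm{ind}(S)=\mathrm{rank}\,\Lambda$; (3) $\dot R$ is of type $B_\ell$, and either $S$ is a lattice or $\mathrm{ind}(S_1)=\mathrm{rank}\,\Lambda_1$.
   Context: An extended affine root system (EARS) is a triple $(R,(\cdot,\cdot),\mathcal V)$ with $\mathcal V$ a finite-dimensional real vector space, $(\cdot,\cdot)$ symmetric positive semidefinite, $R\subseteq\mathcal V$, such that with $R^\times=\{\alpha\in R:(\alpha,\alpha)\neq0\}$, $R^0=R\setminus R^\times$: $0\in R$; $R=-R$; $R$ spans $\mathcal V$; $\alpha\in R^\times\Rightarrow2\alpha\notin R$; $R$ discrete; for $\alpha\in R^\times,\beta\in R$ there are integers $d,u\ge0$ with $(\beta+\mathbb Z\alpha)\cap R=\{\beta-d\alpha,\dots,\beta+u\alpha\}$ and $2(\beta,\alpha)/(\alpha,\alpha)=d-u$; every $\sigma\in R^0$ is non-isolated ($\alpha+\sigma\in R$ for some $\alpha\in R^\times$); $R^\times$ is connected (not a union of two nonempty mutually orthogonal subsets). Let $\mathcal V^0=\mathrm{span}_{\mathbb R}R^0$; the image of $R$ in $\mathcal V/\mathcal V^0$ is an irreducible finite root system, assumed reduced, giving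 the type of $R$. $\langle X\rangle$ denotes the additive subgroup generated by $X$. Structure: there are a finite root system $\dot R\subseteq R$ (containing $0$, mapping bijectively onto $R$ modulo $\mathcal V^0$) and semilattices $S,L\subseteq\mathcal V^0$ with $R=(S+S)\cup(\dot R_{sh}+S)\cup(\dot R_{lg}+L)$, $R^0=S+S$ ($\dot R_{sh},\dot R_{lg}$ the nonzero short/long roots of $\dot R$; all nonzero roots short if simply laced, last term then empty); write $R=R(\dot R,S,L)$. A semilattice $S$ in $\Lambda=\langle S\rangle$ has the form $S=\bigcup_{i=0}^m(\tau_i+2\Lambda)$, $\tau_0=0$, $\tau_i$ representatives of distinct cosets of $2\Lambda$; $\mathrm{ind}(S)=m$; $S$ is a lattice iff $S=\Lambda$. In type $B_\ell$ there are lattices with $\Lambda=\Lambda_1\oplus\Lambda_2$ and a semilattice $S_1$ in $\Lambda_1$ with $S=S_1\oplus\Lambda_2$; $\Lambda_1,S_1$ refer to such a decomposition. For a nonempty subset $T\subseteq R^\times$: $\tilde R_T^\times=\langle T\rangle\cap R^\times$, $\tilde R_T^0=\mathcal V^0\cap(\tilde R_T^\times-\tilde R_T^\times)$, $\tilde R_T=\tilde R_T^\times\cup\tilde R_T^0$, with the form restricted to $\mathrm{span}_{\mathbb R}T$. A subsystem of $R$ is $R'\subseteq R$ such that $(R',(\cdot,\cdot)|,\mathrm{span}_{\mathbb R}R')$ is an EARS; closed means $\alpha,\beta\in R'$, $\alpha+\beta\in R\Rightarrow\alpha+\beta\in R'$; canonical means $R'=(S'+S')\cup(\dot R_{sh}+S')\cup(\dot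 R_{lg}+L')$ for some semilattices $S',L'$ (same $\dot R$). *)

theory Defs
  imports "HOL-Analysis.Analysis"
begin

definition zspan :: "'a::real_vector set \<Rightarrow> 'a set" where
  "zspan X = {(\<Sum>x\<in>F. of_int (c x) *\<^sub>R x) | F c. finite F \<and> F \<subseteq> X}"

definition subgrp :: "'a::real_vector set \<Rightarrow> bool" where
  "subgrp U \<longleftrightarrow> 0 \<in> U \<and> (\<forall>x\<in>U. \<forall>y\<in>U. x - y \<in> U)"

definition msum :: "'a::real_vector set \<Rightarrow> 'a set \<Rightarrow> 'a set" where
  "msum A B = {a + b | a b. a \<in> A \<and> b \<in> B}"

definition mdiff :: "'a::real_vector set \<Rightarrow> 'a set \<Rightarrow> 'a set" where
  "mdiff A B = {a - b | a b. a \<in> A \<and> b \<in> B}"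

definition zindep :: "'a::real_vector set \<Rightarrow> bool" where
  "zindep X \<longleftrightarrow> (\<forall>c::'a \<Rightarrow> int. (\<Sum>x\<in>X. of_int (c x) *\<^sub>R x) = 0 \<longrightarrow> (\<forall>x\<in>X. c x = 0))"

definition zrank :: "'a::real_vector set \<Rightarrow> nat" where
  "zrank G = Sup {card X | X. finite X \<and> X \<subseteq> G \<and> zindep X}"

text \<open>A lattice (free abelian group of finite rank): finitely generated subgroup of the
  real vector space (torsion-free, hence free).\<close>
definition fg_lattice :: "'a::real_vector set \<Rightarrow> bool" where
  "fg_lattice G \<longleftrightarrow> subgrp G \<and> (\<exists>F. finite F \<and> zspan F = G)"

text \<open>A semilattice S in the lattice \<Lambda> = zspan S: a union of cosets of 2\<Lambda> containing 2\<Lambda>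
  (i.e. S = union of (tau_i + 2 Lambda), tau_0 = 0).\<close>
definition semilattice :: "'a::real_vector set \<Rightarrow> bool" where
  "semilattice S \<longleftrightarrow> fg_lattice (zspan S) \<and> 0 \<in> S \<and>
     (\<forall>s\<in>S. \<forall>x\<in>zspan S. s + 2 *\<^sub>R x \<in> S)"

text \<open>ind(S) = m, where S is the union of the m+1 distinct cosets tau_i + 2\<Lambda>.\<close>
definition sl_ind :: "'a::real_vector set \<Rightarrow> nat" where
  "sl_ind S = card {{s + 2 *\<^sub>R x | x. x \<in> zspan S} | s. s \<in> S} - 1"

definition is_lattice :: "'a::real_vector set \<Rightarrow> bool" where
  "is_lattice S \<longleftrightarrow> S = zspan S"

definition psd_form :: "('a::real_vector \<Rightarrow> 'a \<Rightarrow> real) \<Rightarrow> bool" where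
  "psd_form B \<longleftrightarrow> bilinear B \<and> (\<forall>x y. B x y = B y x) \<and> (\<forall>x. 0 \<le> B x x)"

definition Rx :: "('a \<Rightarrow> 'a \<Rightarrow> real) \<Rightarrow> 'a set \<Rightarrow> 'a set" where
  "Rx B R = {a \<in> R. B a a \<noteq> 0}"

definition R0 :: "('a \<Rightarrow> 'a \<Rightarrow> real) \<Rightarrow> 'a set \<Rightarrow> 'a set" where
  "R0 B R = R - Rx B R"

definition V0 :: "('a::real_vector \<Rightarrow> 'a \<Rightarrow> real) \<Rightarrow> 'a set \<Rightarrow> 'a set" where
  "V0 B R = span (R0 B R)"

definition discrete_set :: "'a::metric_space set \<Rightarrow> bool" where
  "discrete_set R \<longleftrightarrow> (\<forall>x\<in>R. \<exists>e>0. \<forall>y\<in>R. dist y x < e \<longrightarrow> y = x)"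

text \<open>(R, B restricted, span R) is an extended affine root system.  The ambient
  vector space is V = span R (inside the euclidean space 'a, with its natural topology).\<close>
definition ears :: "('a::euclidean_space \<Rightarrow> 'a \<Rightarrow> real) \<Rightarrow> 'a set \<Rightarrow> bool" where
  "ears B R \<longleftrightarrow>
     0 \<in> R \<and>
     uminus ` R = R \<and>
     (\<forall>a\<in>Rx B R. 2 *\<^sub>R a \<notin> R) \<and>
     discrete_set R \<and>
     (\<forall>a\<in>Rx B R. \<forall>b\<in>R. \<exists>d u :: nat.
        {k::int. b + of_int k *\<^sub>R a \<in> R} = {- int d .. int u} \<and>
        2 * B b a / B a a = real d - real u) \<and>
     (\<forall>s\<in>R0 B R. \<exists>a\<in>Rx B R. a + s \<in> R) \<and>
     \<not> (\<exists>A C. A \<noteq> {} \<and> C \<noteq> {} \<and> A \<union> C = Rx B R \<and> (\<forall>a\<in>A. \<forall>c\<in>C. B a c = 0))"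

definition finite_root_system :: "('a::real_vector \<Rightarrow> 'a \<Rightarrow> real) \<Rightarrow> 'a set \<Rightarrow> bool" where
  "finite_root_system B D \<longleftrightarrow>
     finite D \<and> 0 \<in> D \<and>
     (\<forall>x\<in>span D. x \<noteq> 0 \<longrightarrow> 0 < B x x) \<and>
     (\<forall>a\<in>D - {0}. \<forall>b\<in>D. 2 * B b a / B a a \<in> \<int> \<and> b - (2 * B b a / B a a) *\<^sub>R a \<in> D)"

definition reduced_rs :: "'a::real_vector set \<Rightarrow> bool" where
  "reduced_rs D \<longleftrightarrow> (\<forall>a\<in>D - {0}. \<forall>c::real. c *\<^sub>R a \<in> D - {0} \<longrightarrow> c = 1 \<or> c = -1)"

text \<open>Nonzero short roots; all nonzero roots are short in the simply laced case.\<close>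
definition short_roots :: "('a::real_vector \<Rightarrow> 'a \<Rightarrow> real) \<Rightarrow> 'a set \<Rightarrow> 'a set" where
  "short_roots B D = {a \<in> D - {0}. \<forall>b\<in>D - {0}. B a a \<le> B b b}"

definition long_roots :: "('a::real_vector \<Rightarrow> 'a \<Rightarrow> real) \<Rightarrow> 'a set \<Rightarrow> 'a set" where
  "long_roots B D = (D - {0}) - short_roots B D"

definition type_A1 :: "'a::real_vector set \<Rightarrow> bool" where
  "type_A1 D \<longleftrightarrow> (\<exists>a. a \<noteq> 0 \<and> D = {0, a, - a})"

text \<open>Type B_l (l \<ge> 2): there is a linear isomorphism of span D onto R^l carrying D
  (with 0) to the standard B_l = {0} \<union> {\<pm>e_i} \<union> {\<pm>e_i \<pm> e_j, i \<noteq> j};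
  equivalently D has this form for a linearly independent family e_0..e_(l-1).\<close>
definition type_B :: "'a::real_vector set \<Rightarrow> bool" where
  "type_B D \<longleftrightarrow> (\<exists>l::nat. \<exists>e::nat \<Rightarrow> 'a. 2 \<le> l \<and> inj_on e {..<l} \<and>
      independent (e ` {..<l}) \<and>
      D = {0} \<union> {s *\<^sub>R e i | s i. s \<in> {1, -1} \<and> i < l}
            \<union> {s *\<^sub>R e i + t *\<^sub>R e j | s t i j. s \<in> {1, -1} \<and> t \<in> {1, -1} \<and> i < l \<and> j < l \<and> i \<noteq> j})"

definition tildeR :: "('a::real_vector \<Rightarrow> 'a \<Rightarrow> real) \<Rightarrow> 'a set \<Rightarrow> 'a set \<Rightarrow> 'a set" where
  "tildeR B R T =
     (let X = zspan T \<inter> Rx B R in X \<union> (V0 B R \<inter> mdiff X X))"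

definition subsystem :: "('a::euclidean_space \<Rightarrow> 'a \<Rightarrow> real) \<Rightarrow> 'a set \<Rightarrow> 'a set \<Rightarrow> bool" where
  "subsystem B R R' \<longleftrightarrow> R' \<subseteq> R \<and> ears B R'"

definition closed_sub :: "'a::real_vector set \<Rightarrow> 'a set \<Rightarrow> bool" where
  "closed_sub R R' \<longleftrightarrow> (\<forall>a\<in>R'. \<forall>b\<in>R'. a + b \<in> R \<longrightarrow> a + b \<in> R')"

definition RSL :: "('a::real_vector \<Rightarrow> 'a \<Rightarrow> real) \<Rightarrow> 'a set \<Rightarrow> 'a set \<Rightarrow> 'a set \<Rightarrow> 'a set" where
  "RSL B D S L = msum S S \<union> msum (short_roots B D) S \<union> msum (long_roots B D) L"

definition canonical_sub :: "('a::real_vector \<Rightarrow> 'a \<Rightarrow> real) \<Rightarrow> 'a set \<Rightarrow> 'a set \<Rightarrow> bool" where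
  "canonical_sub B D R' \<longleftrightarrow> (\<exists>S' L'. semilattice S' \<and> semilattice L' \<and> R' = RSL B D S' L')"

end

theory Submission
  imports Defs
begin

text \<open>
  Let W be the group generated by T; it contains the nonzero roots of Rd.  Put S' = S \<inter> W,
  L' = L \<inter> W and R' = R(Rd, S', L').  Translating elements of R^x by roots of Rd shows that
  R'^x = W \<inter> R^x and that the null roots of the tilde system are S' + S', so the tilde system
  is R'; it is canonical because S' and L' are semilattices.  All remaining axioms, and
  closedness, follow from the single condition (S + S) \<inter> \<langle>S'\<rangle> \<subseteq> S' + S'.

  This condition is trivial when S + S \<subseteq> S, e.g. when S is a lattice.  If Rd is neither A_1
  nor B_l, there are short roots a, b with a + b a short root (the irreducible systems whose
  non-opposite short roots are orthogonal are exactly A_1 and B_l), and then the root string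
  property gives S + S \<subseteq> S.  In the full-index case ind(S1) = rank \<Lambda>1 the nonzero classes
  of S1 modulo 2\<Lambda>1 form a basis of the F_2-space \<Lambda>1/2\<Lambda>1, and reduction modulo 2 shows
  that an element x of (S + S) \<inter> \<langle>S'\<rangle> either lies in S' or has the form y + (x - y) with
  y, x - y \<in> S'.
\<close>

section \<open>Additive subgroups and their generators\<close>

lemma subgrp_0: "subgrp H \<Longrightarrow> 0 \<in> H"
  unfolding subgrp_def by auto

lemma subgrp_diff: "subgrp H \<Longrightarrow> a \<in> H \<Longrightarrow> b \<in> H \<Longrightarrow> a - b \<in> H"
  unfolding subgrp_def by auto

lemma subgrp_neg: "subgrp H \<Longrightarrow> a \<in> H \<Longrightarrow> - a \<in> H"
  by (metis diff_0 subgrp_0 subgrp_diff)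

lemma subgrp_add: "subgrp H \<Longrightarrow> a \<in> H \<Longrightarrow> b \<in> H \<Longrightarrow> a + b \<in> H"
  by (metis diff_minus_eq_add subgrp_diff subgrp_neg)

lemma subgrp_scaleR_int:
  assumes H: "subgrp H" and a: "a \<in> H"
  shows "of_int k *\<^sub>R a \<in> H"
proof (induction k rule: int_induct[where k = 0])
  case base
  show ?case using subgrp_0[OF H] by simp
next
  case (step1 i)
  then show ?case using subgrp_add[OF H _ a] by (simp add: scaleR_add_left)
next
  case (step2 i)
  then show ?case using subgrp_diff[OF H _ a] by (simp add: scaleR_diff_left)
qed

lemma subgrp_sum:
  assumes "subgrp H" "finite F" "\<And>x. x \<in> F \<Longrightarrow> f x \<in> H"
  shows "sum f F \<in> H"
  using assms(2,3)
  by (induction F rule: finite_induct) (auto intro: subgrp_0[OF assms(1)] subgrp_add[OF assms(1)])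

lemma subgrp_Int: "subgrp G \<Longrightarrow> subgrp H \<Longrightarrow> subgrp (G \<inter> H)"
  unfolding subgrp_def by blast

lemma zspan_superset: "X \<subseteq> zspan X"
proof
  fix x assume "x \<in> X"
  then show "x \<in> zspan X"
    unfolding zspan_def by (intro CollectI exI[of _ "{x}"] exI[of _ "\<lambda>_. 1"]) auto
qed

lemma zspan_mono: "X \<subseteq> Y \<Longrightarrow> zspan X \<subseteq> zspan Y"
  unfolding zspan_def by blast

lemma zspan_finite:
  assumes "finite F"
  shows "zspan F = range (\<lambda>c. \<Sum>x\<in>F. of_int (c x) *\<^sub>R x)"
proof
  show "zspan F \<subseteq> range (\<lambda>c. \<Sum>x\<in>F. of_int (c x) *\<^sub>R x)"
  proof
    fix v assume "v \<in> zspan F"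
    then obtain G c where G: "finite G" "G \<subseteq> F" "v = (\<Sum>x\<in>G. of_int (c x) *\<^sub>R x)"
      unfolding zspan_def by blast
    define c' where "c' x = (if x \<in> G then c x else 0)" for x
    have "(\<Sum>x\<in>F. of_int (c' x) *\<^sub>R x) = (\<Sum>x\<in>G. of_int (c' x) *\<^sub>R x)"
      by (rule sum.mono_neutral_right) (use assms G in \<open>simp_all add: c'_def\<close>)
    also have "\<dots> = v" unfolding G(3) by (rule sum.cong) (simp_all add: c'_def)
    finally show "v \<in> range (\<lambda>c. \<Sum>x\<in>F. of_int (c x) *\<^sub>R x)"
      using rangeI[of "\<lambda>c. \<Sum>x\<in>F. of_int (c x) *\<^sub>R x" c'] by simp
  qed
  show "range (\<lambda>c. \<Sum>x\<in>F. of_int (c x) *\<^sub>R x) \<subseteq> zspan F"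
    using assms unfolding zspan_def by blast
qed

lemma subgrp_zspan: "subgrp (zspan X)"
  unfolding subgrp_def
proof (intro conjI ballI)
  show "0 \<in> zspan X"
    unfolding zspan_def by (intro CollectI exI[of _ "{}"]) auto
  fix a b assume a: "a \<in> zspan X" and b: "b \<in> zspan X"
  obtain F c where F: "finite F" "F \<subseteq> X" "a = (\<Sum>x\<in>F. of_int (c x) *\<^sub>R x)"
    using a unfolding zspan_def by blast
  obtain G d where G: "finite G" "G \<subseteq> X" "b = (\<Sum>x\<in>G. of_int (d x) *\<^sub>R x)"
    using b unfolding zspan_def by blast
  have fin: "finite (F \<union> G)" using F G by simp
  have "a \<in> zspan (F \<union> G)" "b \<in> zspan (F \<union> G)"
    using F G unfolding zspan_def by blast+
  then obtain c' d'
    where "a = (\<Sum>x\<in>F \<union> G. of_int (c' x) *\<^sub>R x)" "b = (\<Sum>x\<in>F \<union> G. of_int (d' x) *\<^sub>R x)"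
    unfolding zspan_finite[OF fin] by blast
  then have "a - b = (\<Sum>x\<in>F \<union> G. of_int (c' x - d' x) *\<^sub>R x)"
    by (simp add: sum_subtractf scaleR_diff_left)
  then show "a - b \<in> zspan X"
    unfolding zspan_def
    by (intro CollectI exI[of _ "F \<union> G"] exI[of _ "\<lambda>x. c' x - d' x"]) (use fin F G in auto)
qed

lemma zspan_minimal: "subgrp H \<Longrightarrow> X \<subseteq> H \<Longrightarrow> zspan X \<subseteq> H"
  unfolding zspan_def by (auto intro!: subgrp_sum subgrp_scaleR_int)

lemma zspan_subgrp: "subgrp H \<Longrightarrow> zspan H = H"
  using zspan_minimal zspan_superset by blast

lemmas zspan_0 = subgrp_0[OF subgrp_zspan]
lemmas zspan_add = subgrp_add[OF subgrp_zspan]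
lemmas zspan_diff = subgrp_diff[OF subgrp_zspan]
lemmas zspan_neg = subgrp_neg[OF subgrp_zspan]
lemmas zspan_scaleR_int = subgrp_scaleR_int[OF subgrp_zspan]

lemma zspan_sum_image:
  "finite F \<Longrightarrow> (\<Sum>x\<in>F. of_int (c x) *\<^sub>R f x) \<in> zspan (f ` F)"
  by (rule subgrp_sum[OF subgrp_zspan])
     (auto intro!: zspan_scaleR_int intro: zspan_superset[THEN subsetD])

lemma zspan_insert: "zspan (insert g F) = {of_int k *\<^sub>R g + f | k f. f \<in> zspan F}"
proof
  let ?M = "{of_int k *\<^sub>R g + f | k f. f \<in> zspan F}"
  have "subgrp ?M"
    unfolding subgrp_def
  proof (intro conjI ballI)
    show "0 \<in> ?M" using zspan_0 by (intro CollectI exI[of _ 0] exI[of _ 0]) simp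
    fix x y assume "x \<in> ?M" "y \<in> ?M"
    then obtain k1 f1 k2 f2 where "x = of_int k1 *\<^sub>R g + f1" "f1 \<in> zspan F"
      "y = of_int k2 *\<^sub>R g + f2" "f2 \<in> zspan F" by blast
    then have "x - y = of_int (k1 - k2) *\<^sub>R g + (f1 - f2) \<and> f1 - f2 \<in> zspan F"
      by (simp add: zspan_diff algebra_simps)
    then show "x - y \<in> ?M" by blast
  qed
  moreover have "insert g F \<subseteq> ?M"
  proof
    fix x assume "x \<in> insert g F"
    then consider "x = g" | "x \<in> F" by blast
    then show "x \<in> ?M"
    proof cases
      case 1
      then show ?thesis using zspan_0 by (intro CollectI exI[of _ 1] exI[of _ 0]) simp
    next
      case 2
      then show ?thesis using zspan_superset by (intro CollectI exI[of _ 0] exI[of _ x]) auto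
    qed
  qed
  ultimately show "zspan (insert g F) \<subseteq> ?M" by (rule zspan_minimal)
  have "g \<in> zspan (insert g F)" "zspan F \<subseteq> zspan (insert g F)"
    using zspan_superset zspan_mono by blast+
  then show "?M \<subseteq> zspan (insert g F)"
    by (auto intro!: zspan_add zspan_scaleR_int)
qed

section \<open>Free abelian groups: bases and rank\<close>

lemma zindep_subset:
  assumes "finite X" "zindep X" "Y \<subseteq> X"
  shows "zindep Y"
  unfolding zindep_def
proof (intro allI impI ballI)
  fix c :: "'a \<Rightarrow> int" and y
  assume s: "(\<Sum>x\<in>Y. of_int (c x) *\<^sub>R x) = 0" and y: "y \<in> Y"
  define c' where "c' x = (if x \<in> Y then c x else 0)" for x
  have "(\<Sum>x\<in>X. of_int (c' x) *\<^sub>R x) = (\<Sum>x\<in>Y. of_int (c' x) *\<^sub>R x)"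
    by (rule sum.mono_neutral_right) (use assms in \<open>simp_all add: c'_def\<close>)
  also have "\<dots> = 0" unfolding s[symmetric] by (rule sum.cong) (simp_all add: c'_def)
  finally have "c' y = 0" using assms(2,3) y unfolding zindep_def by blast
  then show "c y = 0" using y by (simp add: c'_def)
qed

lemma zindep_insert_coeff:
  assumes "finite F" "g \<notin> F" "zindep (insert g F)" "of_int k *\<^sub>R g \<in> zspan F"
  shows "k = 0"
proof -
  obtain c where c: "of_int k *\<^sub>R g = (\<Sum>x\<in>F. of_int (c x) *\<^sub>R x)"
    using assms(4) zspan_finite[OF assms(1)] by blast
  define c' where "c' x = (if x = g then k else - c x)" for x
  have "(\<Sum>x\<in>insert g F. of_int (c' x) *\<^sub>R x) = of_int k *\<^sub>R g + (\<Sum>x\<in>F. of_int (c' x) *\<^sub>R x)"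
    using assms(1,2) by (simp add: c'_def)
  also have "(\<Sum>x\<in>F. of_int (c' x) *\<^sub>R x) = - (\<Sum>x\<in>F. of_int (c x) *\<^sub>R x)"
    unfolding sum_negf[symmetric] by (rule sum.cong) (use assms(2) in \<open>auto simp: c'_def\<close>)
  finally have "(\<Sum>x\<in>insert g F. of_int (c' x) *\<^sub>R x) = 0" using c by simp
  then have "c' g = 0" using assms(3) unfolding zindep_def by blast
  then show ?thesis by (simp add: c'_def)
qed

text \<open>Dividing a dependence relation by the coefficient of x0 expresses x0 through the
  rescaled remaining vectors.\<close>
lemma zspan_rescaled_remove:
  assumes G: "finite G" and c: "(\<Sum>x\<in>G. of_int (c x) *\<^sub>R x) = 0" "x0 \<in> G" "c x0 \<noteq> 0"
  shows "zspan G \<subseteq> zspan ((\<lambda>x. (1 / of_int (c x0)) *\<^sub>R x) ` (G - {x0}))"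
    (is "_ \<subseteq> zspan (?f ` _)")
proof (rule zspan_minimal[OF subgrp_zspan], rule subsetI)
  fix x assume x: "x \<in> G"
  show "x \<in> zspan (?f ` (G - {x0}))"
  proof (cases "x = x0")
    case False
    have "?f x \<in> zspan (?f ` (G - {x0}))"
      using x False by (intro zspan_superset[THEN subsetD] imageI) auto
    then have "of_int (c x0) *\<^sub>R ?f x \<in> zspan (?f ` (G - {x0}))" by (rule zspan_scaleR_int)
    then show ?thesis using c(3) by simp
  next
    case True
    have "(\<Sum>x\<in>G. of_int (c x) *\<^sub>R x) = of_int (c x0) *\<^sub>R x0 + (\<Sum>x\<in>G - {x0}. of_int (c x) *\<^sub>R x)"
      using G c(2) by (simp add: sum.remove)
    then have e: "of_int (c x0) *\<^sub>R x0 = - (\<Sum>x\<in>G - {x0}. of_int (c x) *\<^sub>R x)"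
      using c(1) by (simp add: eq_neg_iff_add_eq_0)
    have "x0 = (1 / of_int (c x0)) *\<^sub>R (of_int (c x0) *\<^sub>R x0)" using c(3) by simp
    also have "\<dots> = (\<Sum>x\<in>G - {x0}. of_int (- c x) *\<^sub>R ?f x)"
      unfolding e by (simp add: scaleR_sum_right sum_negf[symmetric])
    also have "\<dots> \<in> zspan (?f ` (G - {x0}))" by (rule zspan_sum_image) (use G in simp)
    finally show ?thesis using True by simp
  qed
qed

lemma finite_zspan_sub_zindep_zspan:
  assumes "finite G"
  shows "\<exists>B. finite B \<and> zindep B \<and> zspan G \<subseteq> zspan B \<and> card B \<le> card G"
  using assms
proof (induction "card G" arbitrary: G rule: less_induct)
  case less
  show ?case
  proof (cases "zindep G")
    case True
    then show ?thesis using less.prems by blast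
  next
    case False
    then obtain c x0 where c: "(\<Sum>x\<in>G. of_int (c x) *\<^sub>R x) = 0" "x0 \<in> G" "c x0 \<noteq> 0"
      unfolding zindep_def by blast
    define G' where "G' = (\<lambda>x. (1 / of_int (c x0)) *\<^sub>R x) ` (G - {x0})"
    have "card G' \<le> card (G - {x0})"
      unfolding G'_def by (rule card_image_le) (use less.prems in simp)
    also have "\<dots> < card G" using less.prems c(2) by (meson card_Diff1_less)
    finally obtain B where B: "finite B" "zindep B" "zspan G' \<subseteq> zspan B" "card B \<le> card G'"
      using less.hyps less.prems by (metis G'_def finite_Diff finite_imageI)
    moreover have "zspan G \<subseteq> zspan G'"
      unfolding G'_def using zspan_rescaled_remove[OF less.prems c] .
    ultimately show ?thesis
      using \<open>card G' \<le> card (G - {x0})\<close> \<open>card (G - {x0}) < card G\<close> by (intro exI[of _ B]) auto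
  qed
qed

text \<open>The inductive step of the theorem that subgroups of free abelian groups are free: if
  h0 \<in> H has the least positive g-coefficient d occurring in H, then h0 extends a basis
  of H \<inter> zspan F to one of H (independence here, spanning in the next lemma).\<close>
lemma zindep_insert_transversal:
  assumes F: "finite F" "g \<notin> F" "zindep (insert g F)"
    and B: "finite B" "zindep B" "zspan B \<subseteq> zspan F"
    and h0: "h0 - of_int d *\<^sub>R g \<in> zspan F" "d \<noteq> 0"
  shows "h0 \<notin> B" "zindep (insert h0 B)"
proof -
  have g_coeff: "k = 0" if "of_int k *\<^sub>R g \<in> zspan F" for k
    using zindep_insert_coeff[OF F that] .
  have "h0 \<notin> zspan F"
  proof
    assume "h0 \<in> zspan F"
    then have "h0 - (h0 - of_int d *\<^sub>R g) \<in> zspan F" using h0(1) by (rule zspan_diff)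
    then have "d = 0" using g_coeff by simp
    then show False using h0(2) by simp
  qed
  then show h0B: "h0 \<notin> B" using B(3) zspan_superset by blast
  show "zindep (insert h0 B)"
    unfolding zindep_def
  proof (intro allI impI)
    fix c :: "'a \<Rightarrow> int"
    assume "(\<Sum>x\<in>insert h0 B. of_int (c x) *\<^sub>R x) = 0"
    then have s: "of_int (c h0) *\<^sub>R h0 = - (\<Sum>x\<in>B. of_int (c x) *\<^sub>R x)"
      using B(1) h0B by (simp add: eq_neg_iff_add_eq_0)
    have "(\<Sum>x\<in>B. of_int (c x) *\<^sub>R x) \<in> zspan F"
      using zspan_finite[OF B(1)] B(3) by blast
    then have "of_int (c h0) *\<^sub>R h0 - of_int (c h0) *\<^sub>R (h0 - of_int d *\<^sub>R g) \<in> zspan F"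
      unfolding s using zspan_scaleR_int[OF h0(1)] by (blast intro: zspan_diff zspan_neg)
    then have "of_int (c h0 * d) *\<^sub>R g \<in> zspan F" by (simp add: algebra_simps)
    then have "c h0 * d = 0" by (rule g_coeff)
    then have ch0: "c h0 = 0" using h0(2) by simp
    then have "(\<Sum>x\<in>B. of_int (c x) *\<^sub>R x) = 0" using s by simp
    then show "\<forall>x\<in>insert h0 B. c x = 0" using B(2) ch0 unfolding zindep_def by blast
  qed
qed

lemma zspan_insert_least_coeff:
  assumes H: "subgrp H" "H \<subseteq> zspan (insert g F)" and B: "zspan B = H \<inter> zspan F"
    and h0: "h0 \<in> H" "h0 - of_int d *\<^sub>R g \<in> zspan F" "0 < d"
    and d_min: "\<And>h k. h \<in> H \<Longrightarrow> h - of_int k *\<^sub>R g \<in> zspan F \<Longrightarrow> 0 < k \<Longrightarrow> d \<le> k"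
  shows "zspan (insert h0 B) = H"
proof
  have "insert h0 B \<subseteq> H" using h0(1) B zspan_superset by blast
  then show "zspan (insert h0 B) \<subseteq> H" using zspan_minimal[OF H(1)] by blast
  show "H \<subseteq> zspan (insert h0 B)"
  proof
    fix h assume h: "h \<in> H"
    then obtain k f where "h = of_int k *\<^sub>R g + f" "f \<in> zspan F"
      using H(2) unfolding zspan_insert by blast
    then have k: "h - of_int k *\<^sub>R g \<in> zspan F" by simp
    define q where "q = k div d"
    define r where "r = k mod d"
    have r: "0 \<le> r" "r < d" unfolding r_def using h0(3) by auto
    have hq: "h - of_int q *\<^sub>R h0 \<in> H"
      using subgrp_diff[OF H(1) h subgrp_scaleR_int[OF H(1) h0(1)]] .
    have "(h - of_int q *\<^sub>R h0) - of_int r *\<^sub>R g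
          = (h - of_int k *\<^sub>R g) - of_int q *\<^sub>R (h0 - of_int d *\<^sub>R g)"
      by (simp add: q_def r_def algebra_simps flip: scaleR_add_left of_int_add of_int_mult)
    also have "\<dots> \<in> zspan F" using k zspan_scaleR_int[OF h0(2)] by (rule zspan_diff)
    finally have rF: "(h - of_int q *\<^sub>R h0) - of_int r *\<^sub>R g \<in> zspan F" .
    then have "r = 0" using d_min[OF hq] r by force
    then have "h - of_int q *\<^sub>R h0 \<in> zspan (insert h0 B)"
      using rF hq B zspan_mono[of B "insert h0 B"] by auto
    moreover have "of_int q *\<^sub>R h0 \<in> zspan (insert h0 B)"
      by (intro zspan_scaleR_int zspan_superset[THEN subsetD]) simp
    ultimately have "(h - of_int q *\<^sub>R h0) + of_int q *\<^sub>R h0 \<in> zspan (insert h0 B)"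
      by (rule zspan_add)
    then show "h \<in> zspan (insert h0 B)" by simp
  qed
qed

lemma subgrp_least_coeff:
  assumes H: "subgrp H" "H \<subseteq> zspan (insert g F)" "\<not> H \<subseteq> zspan F"
  obtains h0 d where "h0 \<in> H" "h0 - of_int d *\<^sub>R g \<in> zspan F" "0 < d"
    "\<And>h k. h \<in> H \<Longrightarrow> h - of_int k *\<^sub>R g \<in> zspan F \<Longrightarrow> 0 < k \<Longrightarrow> d \<le> k"
proof -
  define P where "P n \<longleftrightarrow> 0 < n \<and> (\<exists>h\<in>H. h - of_int (int n) *\<^sub>R g \<in> zspan F)" for n
  have "\<exists>n. P n"
  proof -
    obtain h where h: "h \<in> H" "h \<notin> zspan F" using H(3) by blast
    then obtain k f where kf: "h = of_int k *\<^sub>R g + f" "f \<in> zspan F"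
      using H(2) unfolding zspan_insert by blast
    then have "k \<noteq> 0" using h(2) by auto
    moreover have "- h \<in> H" using subgrp_neg[OF H(1) h(1)] .
    moreover have "- h - of_int (- k) *\<^sub>R g \<in> zspan F" using kf zspan_neg by simp
    ultimately show ?thesis
    proof (cases "k > 0")
      case True
      then show ?thesis
        unfolding P_def using h(1) kf by (intro exI[of _ "nat k"] conjI bexI[of _ h]) auto
    next
      case False
      with \<open>k \<noteq> 0\<close> \<open>- h \<in> H\<close> \<open>- h - of_int (- k) *\<^sub>R g \<in> zspan F\<close> show ?thesis
        unfolding P_def by (intro exI[of _ "nat (- k)"] conjI bexI[of _ "- h"]) auto
    qed
  qed
  then have "P (LEAST n. P n)" by (rule LeastI_ex)
  then obtain h0 where "h0 \<in> H" "h0 - of_int (int (LEAST n. P n)) *\<^sub>R g \<in> zspan F"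
    "0 < int (LEAST n. P n)"
    unfolding P_def by auto
  moreover have "int (LEAST n. P n) \<le> k"
    if "h \<in> H" "h - of_int k *\<^sub>R g \<in> zspan F" "0 < k" for h k
  proof -
    have "P (nat k)" unfolding P_def using that by auto
    then show ?thesis using Least_le[of P "nat k"] that(3) by linarith
  qed
  ultimately show ?thesis using that by blast
qed

lemma zindep_subgrp_basis:
  assumes "finite B" "zindep B" "subgrp H" "H \<subseteq> zspan B"
  shows "\<exists>B'. finite B' \<and> zindep B' \<and> zspan B' = H \<and> card B' \<le> card B"
  using assms
proof (induction B arbitrary: H rule: finite_induct)
  case empty
  then have "H = {0}" using subgrp_0[OF empty.prems(2)] zspan_finite[of "{}"] by auto
  then show ?case by (intro exI[of _ "{}"]) (auto simp: zindep_def zspan_finite)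
next
  case (insert g F)
  have "subgrp (H \<inter> zspan F)" using insert.prems(2) subgrp_zspan by (rule subgrp_Int)
  moreover have "zindep F" using zindep_subset[of "insert g F" F] insert by auto
  ultimately obtain B where B: "finite B" "zindep B" "zspan B = H \<inter> zspan F" "card B \<le> card F"
    using insert.IH by blast
  show ?case
  proof (cases "H \<subseteq> zspan F")
    case True
    then show ?thesis using B insert(1,2) by (intro exI[of _ B]) auto
  next
    case False
    then obtain h0 d where h0: "h0 \<in> H" "h0 - of_int d *\<^sub>R g \<in> zspan F" "0 < d"
      and d_min: "\<And>h k. h \<in> H \<Longrightarrow> h - of_int k *\<^sub>R g \<in> zspan F \<Longrightarrow> 0 < k \<Longrightarrow> d \<le> k"
      using subgrp_least_coeff[OF insert.prems(2,3)] by blast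
    have B_F: "zspan B \<subseteq> zspan F" using B(3) by blast
    note indep = zindep_insert_transversal[OF insert(1,2) insert.prems(1) B(1,2) B_F h0(2)]
    have "zspan (insert h0 B) = H"
      using zspan_insert_least_coeff[OF insert.prems(2,3) B(3) h0 d_min] .
    moreover have "card (insert h0 B) \<le> card (insert g F)"
      using B(1,4) insert(1,2) indep(1) h0(3) by simp
    ultimately show ?thesis using indep h0(3) B(1) by (intro exI[of _ "insert h0 B"]) auto
  qed
qed

lemma subgrp_of_fg_basis:
  assumes "finite G" "subgrp H" "H \<subseteq> zspan G"
  obtains B where "finite B" "zindep B" "zspan B = H" "card B \<le> card G"
proof -
  obtain B where B: "finite B" "zindep B" "zspan G \<subseteq> zspan B" "card B \<le> card G"
    using finite_zspan_sub_zindep_zspan[OF assms(1)] by blast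
  obtain B' where "finite B'" "zindep B'" "zspan B' = H" "card B' \<le> card B"
    using zindep_subgrp_basis[OF B(1,2) assms(2)] assms(3) B(3) by blast
  then show ?thesis using that B(4) by simp
qed

lemma fg_lattice_basis:
  assumes "fg_lattice G"
  obtains B where "finite B" "zindep B" "zspan B = G"
  using assms subgrp_of_fg_basis unfolding fg_lattice_def by (metis order_refl)

section \<open>Congruence modulo twice a subgroup\<close>

definition cong2 :: "'a::real_vector set \<Rightarrow> 'a \<Rightarrow> 'a \<Rightarrow> bool" where
  "cong2 G a b \<longleftrightarrow> (\<exists>w\<in>G. a - b = 2 *\<^sub>R w)"

definition coset2 :: "'a::real_vector set \<Rightarrow> 'a \<Rightarrow> 'a set" where
  "coset2 G x = {x + 2 *\<^sub>R w | w. w \<in> G}"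

lemma cong2_refl: "subgrp G \<Longrightarrow> cong2 G a a"
  unfolding cong2_def using subgrp_0 by force

lemma cong2_sym: "subgrp G \<Longrightarrow> cong2 G a b \<Longrightarrow> cong2 G b a"
  unfolding cong2_def by (metis minus_diff_eq scaleR_minus_right subgrp_neg)

lemma cong2_add: "subgrp G \<Longrightarrow> cong2 G a b \<Longrightarrow> cong2 G c d \<Longrightarrow> cong2 G (a + c) (b + d)"
  unfolding cong2_def
  by (metis (no_types, lifting) add_diff_add scaleR_right_distrib subgrp_add)

lemma cong2_trans: "subgrp G \<Longrightarrow> cong2 G a b \<Longrightarrow> cong2 G b c \<Longrightarrow> cong2 G a c"
  using cong2_add[of G a b b c] unfolding cong2_def by simp

lemma cong2_scaleR_int: "subgrp G \<Longrightarrow> cong2 G a b \<Longrightarrow> cong2 G (of_int k *\<^sub>R a) (of_int k *\<^sub>R b)"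
  unfolding cong2_def
  by (metis scaleR_diff_right scaleR_left_commute subgrp_scaleR_int)

lemma cong2_sum:
  assumes "subgrp G" "finite F" "\<And>x. x \<in> F \<Longrightarrow> cong2 G (f x) (g x)"
  shows "cong2 G (sum f F) (sum g F)"
  using assms(2,3)
  by (induction F rule: finite_induct) (auto intro: cong2_refl[OF assms(1)] cong2_add[OF assms(1)])

lemma cong2_even: "subgrp G \<Longrightarrow> g \<in> G \<Longrightarrow> even k \<Longrightarrow> cong2 G (of_int k *\<^sub>R g) 0"
  unfolding cong2_def
  by (intro bexI[of _ "of_int (k div 2) *\<^sub>R g"]) (auto elim!: evenE intro: subgrp_scaleR_int)

lemma coset2_eq_iff:
  assumes "subgrp G"
  shows "coset2 G a = coset2 G b \<longleftrightarrow> cong2 G a b"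
proof
  assume "coset2 G a = coset2 G b"
  moreover have "a \<in> coset2 G a"
    unfolding coset2_def using subgrp_0[OF assms] by force
  ultimately show "cong2 G a b" unfolding coset2_def cong2_def by auto
next
  have sub: "coset2 G x \<subseteq> coset2 G y" if xy: "cong2 G x y" for x y
  proof
    fix z assume "z \<in> coset2 G x"
    then obtain v where v: "v \<in> G" "z = x + 2 *\<^sub>R v" unfolding coset2_def by blast
    obtain w where w: "w \<in> G" "x - y = 2 *\<^sub>R w" using xy unfolding cong2_def by blast
    have "z = y + 2 *\<^sub>R (w + v)" using v w by (simp add: algebra_simps)
    then show "z \<in> coset2 G y" unfolding coset2_def using subgrp_add[OF assms w(1) v(1)] by blast
  qed
  assume "cong2 G a b"
  then show "coset2 G a = coset2 G b"
    using sub cong2_sym[OF assms] by blast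
qed

text \<open>Reduce the coefficients modulo 2.\<close>
lemma cong2_subset_sum:
  assumes G: "subgrp G" and "finite M" "M \<subseteq> G" "z \<in> zspan M"
  shows "\<exists>Q\<subseteq>M. cong2 G z (\<Sum>Q)"
  using assms(2-4)
proof (induction M arbitrary: z rule: finite_induct)
  case empty
  then have "z = 0" using zspan_finite[of "{}"] by auto
  then show ?case by (intro exI[of _ "{}"]) (simp add: cong2_refl[OF G])
next
  case (insert g M)
  obtain k f where kf: "z = of_int k *\<^sub>R g + f" "f \<in> zspan M"
    using insert.prems(2) unfolding zspan_insert by blast
  obtain Q where Q: "Q \<subseteq> M" "cong2 G f (\<Sum>Q)"
    using insert.IH[OF _ kf(2)] insert.prems(1) by blast
  have g: "g \<in> G" using insert.prems(1) by blast
  show ?case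
  proof (cases "even k")
    case True
    have "cong2 G (of_int k *\<^sub>R g + f) (0 + \<Sum>Q)"
      by (rule cong2_add[OF G cong2_even[OF G g True] Q(2)])
    then show ?thesis using Q(1) kf(1) by (intro exI[of _ Q]) auto
  next
    case False
    have "cong2 G (of_int (k - 1) *\<^sub>R g + g) (0 + g)"
      using cong2_even[OF G g, of "k - 1"] False by (intro cong2_add[OF G _ cong2_refl[OF G]]) simp
    then have "cong2 G (of_int k *\<^sub>R g + f) (g + \<Sum>Q)"
      by (intro cong2_add[OF G _ Q(2)]) (simp add: algebra_simps)
    moreover have "\<Sum>(insert g Q) = g + \<Sum>Q"
      using Q(1) insert(1,2) by (subst sum.insert) (auto intro: finite_subset)
    ultimately show ?thesis using Q(1) kf(1) by (intro exI[of _ "insert g Q"]) auto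
  qed
qed

lemma card_cosets2_eq_pow_iff:
  assumes G: "subgrp G" and M: "finite M" "M \<subseteq> G"
    and reach: "\<And>l. l \<in> G \<Longrightarrow> \<exists>Q\<subseteq>M. cong2 G l (\<Sum>Q)"
  shows "card (coset2 G ` G) = 2 ^ card M \<longleftrightarrow>
         (\<forall>Q Q'. Q \<subseteq> M \<longrightarrow> Q' \<subseteq> M \<longrightarrow> cong2 G (\<Sum>Q) (\<Sum>Q') \<longrightarrow> Q = Q')"
proof -
  define \<phi> where "\<phi> Q = coset2 G (\<Sum>Q)" for Q
  have "\<phi> ` Pow M = coset2 G ` G"
  proof
    have "\<Sum>Q \<in> G" if "Q \<subseteq> M" for Q
      using that M by (intro subgrp_sum[OF G]) (auto intro: finite_subset)
    then show "\<phi> ` Pow M \<subseteq> coset2 G ` G" unfolding \<phi>_def by blast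
    show "coset2 G ` G \<subseteq> \<phi> ` Pow M"
    proof
      fix C assume "C \<in> coset2 G ` G"
      then obtain l where l: "l \<in> G" "C = coset2 G l" by blast
      then obtain Q where "Q \<subseteq> M" "cong2 G l (\<Sum>Q)" using reach by blast
      then show "C \<in> \<phi> ` Pow M" unfolding \<phi>_def l(2) coset2_eq_iff[OF G, symmetric] by blast
    qed
  qed
  then have "card (coset2 G ` G) = 2 ^ card M \<longleftrightarrow> inj_on \<phi> (Pow M)"
    using M(1) by (metis card_Pow eq_card_imp_inj_on finite_Pow_iff inj_on_iff_eq_card)
  also have "\<dots> \<longleftrightarrow> (\<forall>Q Q'. Q \<subseteq> M \<longrightarrow> Q' \<subseteq> M \<longrightarrow> cong2 G (\<Sum>Q) (\<Sum>Q') \<longrightarrow> Q = Q')"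
    unfolding inj_on_def \<phi>_def coset2_eq_iff[OF G] by blast
  finally show ?thesis .
qed

lemma zindep_subset_sums_incongruent:
  assumes B: "finite B" "zindep B" and Q: "Q \<subseteq> B" "Q' \<subseteq> B"
    and cong: "cong2 (zspan B) (\<Sum>Q) (\<Sum>Q')"
  shows "Q = Q'"
proof -
  let ?i = "\<lambda>Q b. (if b \<in> Q then 1 else 0) :: int"
  have indicator_sum: "\<Sum>Q = (\<Sum>b\<in>B. of_int (?i Q b) *\<^sub>R b)" if "Q \<subseteq> B" for Q
  proof -
    have "(\<Sum>b\<in>B. of_int (?i Q b) *\<^sub>R b) = (\<Sum>b\<in>B. if b \<in> Q then b else 0)"
      by (rule sum.cong) auto
    also have "\<dots> = \<Sum>Q" using B(1) that by (simp add: sum.If_cases Int_absorb1)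
    finally show ?thesis ..
  qed
  obtain w where w: "w \<in> zspan B" "\<Sum>Q - \<Sum>Q' = 2 *\<^sub>R w" using cong unfolding cong2_def by blast
  obtain d where d: "w = (\<Sum>b\<in>B. of_int (d b) *\<^sub>R b)" using w(1) zspan_finite[OF B(1)] by blast
  have "(\<Sum>b\<in>B. of_int (?i Q b - ?i Q' b - 2 * d b) *\<^sub>R b) = \<Sum>Q - \<Sum>Q' - 2 *\<^sub>R w"
    unfolding d indicator_sum[OF Q(1)] indicator_sum[OF Q(2)]
    by (simp add: sum_subtractf scaleR_diff_left scaleR_sum_right)
  also have "\<dots> = 0" using w(2) by simp
  finally have s0: "(\<Sum>b\<in>B. of_int (?i Q b - ?i Q' b - 2 * d b) *\<^sub>R b) = 0" .
  have "\<And>c. (\<Sum>x\<in>B. of_int (c x) *\<^sub>R x) = 0 \<Longrightarrow> \<forall>x\<in>B. c x = 0"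
    using B(2) unfolding zindep_def by blast
  from this[OF s0] have coeffs: "\<forall>b\<in>B. ?i Q b - ?i Q' b - 2 * d b = 0" .
  have "b \<in> Q \<longleftrightarrow> b \<in> Q'" if "b \<in> B" for b
  proof -
    have "?i Q b - ?i Q' b - 2 * d b = 0" using that coeffs by blast
    then show ?thesis by (auto split: if_splits) presburger+
  qed
  then show "Q = Q'" using Q by blast
qed

lemma card_cosets2_basis:
  assumes "finite B" "zindep B"
  shows "card (coset2 (zspan B) ` zspan B) = 2 ^ card B"
proof -
  have "\<forall>Q Q'. Q \<subseteq> B \<longrightarrow> Q' \<subseteq> B \<longrightarrow> cong2 (zspan B) (\<Sum>Q) (\<Sum>Q') \<longrightarrow> Q = Q'"
    using zindep_subset_sums_incongruent[OF assms] by blast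
  moreover have "\<exists>Q\<subseteq>B. cong2 (zspan B) l (\<Sum>Q)" if "l \<in> zspan B" for l
    using cong2_subset_sum[OF subgrp_zspan assms(1) zspan_superset that] .
  ultimately show ?thesis
    using card_cosets2_eq_pow_iff[OF subgrp_zspan assms(1) zspan_superset] by blast
qed

lemma zrank_basis:
  assumes "finite B" "zindep B"
  shows "zrank (zspan B) = card B"
proof -
  have "card X \<le> card B" if X: "finite X" "X \<subseteq> zspan B" "zindep X" for X
  proof -
    obtain B' where B': "finite B'" "zindep B'" "zspan B' = zspan X" "card B' \<le> card B"
      using subgrp_of_fg_basis[OF assms(1) subgrp_zspan] X(2) zspan_minimal[OF subgrp_zspan]
      by metis
    have "(2::nat) ^ card X = 2 ^ card B'"
      using card_cosets2_basis[OF X(1,3)] card_cosets2_basis[OF B'(1,2)] B'(3) by simp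
    then show ?thesis using B'(4) by simp
  qed
  then show ?thesis
    unfolding zrank_def using assms zspan_superset by (intro cSup_eq_maximum) auto
qed

section \<open>Semilattices\<close>

lemma semilattice_0: "semilattice S \<Longrightarrow> 0 \<in> S"
  unfolding semilattice_def by blast

lemma semilattice_add_double: "semilattice S \<Longrightarrow> s \<in> S \<Longrightarrow> w \<in> zspan S \<Longrightarrow> s + 2 *\<^sub>R w \<in> S"
  unfolding semilattice_def by blast

lemma semilattice_neg:
  assumes "semilattice S" "s \<in> S"
  shows "- s \<in> S"
  using semilattice_add_double[OF assms zspan_neg[of s S]] assms(2) zspan_superset
  by (auto simp: scaleR_2)

lemma semilattice_Int_subgrp:
  assumes S: "semilattice S" and W: "subgrp W"
  shows "semilattice (S \<inter> W)"
  unfolding semilattice_def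
proof (intro conjI ballI)
  have sub: "zspan (S \<inter> W) \<subseteq> zspan S" by (rule zspan_mono) blast
  obtain F where "finite F" "zspan F = zspan S"
    using S unfolding semilattice_def fg_lattice_def by blast
  then obtain B where "finite B" "zspan B = zspan (S \<inter> W)"
    using subgrp_of_fg_basis[OF _ subgrp_zspan] sub by metis
  then show "fg_lattice (zspan (S \<inter> W))" unfolding fg_lattice_def using subgrp_zspan by blast
  show "0 \<in> S \<inter> W" using semilattice_0[OF S] subgrp_0[OF W] by blast
  fix s x assume s: "s \<in> S \<inter> W" and x: "x \<in> zspan (S \<inter> W)"
  have "x \<in> W" using x zspan_minimal[OF W, of "S \<inter> W"] by blast
  then have "s + 2 *\<^sub>R x \<in> W"
    using s subgrp_add[OF W] subgrp_scaleR_int[OF W, of x 2] by simp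
  moreover have "s + 2 *\<^sub>R x \<in> S" using semilattice_add_double[OF S] s x sub by blast
  ultimately show "s + 2 *\<^sub>R x \<in> S \<inter> W" by blast
qed

lemma semilattice_add_mem:
  assumes S: "semilattice S" and a: "a \<in> S" "b \<in> S"
    and cong: "cong2 (zspan S) a 0 \<or> cong2 (zspan S) a b"
  shows "a + b \<in> S"
  using cong
proof
  assume "cong2 (zspan S) a 0"
  then obtain w where "w \<in> zspan S" "a = 2 *\<^sub>R w" unfolding cong2_def by auto
  then show ?thesis using semilattice_add_double[OF S a(2)] by (simp add: add.commute)
next
  assume "cong2 (zspan S) a b"
  then obtain w where w: "w \<in> zspan S" "a - b = 2 *\<^sub>R w" unfolding cong2_def by blast
  have "b + w \<in> zspan S" using zspan_add[OF _ w(1)] zspan_superset a(2) by blast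
  moreover have "a + b = 0 + 2 *\<^sub>R (b + w)" using w(2) by (simp add: algebra_simps scaleR_2)
  ultimately show ?thesis using semilattice_add_double[OF S semilattice_0[OF S]] by simp
qed

lemma cong2_zspan_reps:
  assumes G: "subgrp G" and M: "finite M" "M \<subseteq> G"
    and reps: "\<And>s. s \<in> X \<Longrightarrow> \<exists>t\<in>insert 0 M. cong2 G s t" and l: "l \<in> zspan X"
  shows "\<exists>Q\<subseteq>M. cong2 G l (\<Sum>Q)"
proof -
  obtain F c where F: "finite F" "F \<subseteq> X" "l = (\<Sum>x\<in>F. of_int (c x) *\<^sub>R x)"
    using l unfolding zspan_def by blast
  define r where "r x = (SOME t. t \<in> insert 0 M \<and> cong2 G x t)" for x
  have r: "r x \<in> insert 0 M \<and> cong2 G x (r x)" if "x \<in> X" for x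
    unfolding r_def using reps[OF that] by (rule someI2_bex) blast
  have "cong2 G l (\<Sum>x\<in>F. of_int (c x) *\<^sub>R r x)"
    unfolding F(3) using r F(2) by (intro cong2_sum[OF G F(1)] cong2_scaleR_int[OF G]) blast
  moreover have "(\<Sum>x\<in>F. of_int (c x) *\<^sub>R r x) \<in> zspan M"
  proof -
    have "r x \<in> zspan M" if "x \<in> F" for x
    proof -
      have "r x \<in> insert 0 M" using r[of x] that F(2) by blast
      then consider "r x = 0" | "r x \<in> M" by blast
      then show ?thesis by cases (auto simp: zspan_0 intro: zspan_superset[THEN subsetD])
    qed
    then have "r ` F \<subseteq> zspan M" by blast
    then show ?thesis using zspan_sum_image[OF F(1), of c r] zspan_minimal[OF subgrp_zspan] by blast
  qed
  then obtain Q where "Q \<subseteq> M" "cong2 G (\<Sum>x\<in>F. of_int (c x) *\<^sub>R r x) (\<Sum>Q)"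
    using cong2_subset_sum[OF G M] by blast
  ultimately show ?thesis using cong2_trans[OF G] by blast
qed

lemma sl_ind_eq_card: "sl_ind S = card (coset2 (zspan S) ` S) - 1"
  unfolding sl_ind_def coset2_def by (simp add: setcompr_eq_image)

text \<open>Tau is a basis of the F_2-vector space \<Lambda>/2\<Lambda>, \<Lambda> = zspan S: its subset sums reach every
  class, and there are 2^rank \<Lambda> classes.\<close>
lemma semilattice_full_index_reps:
  assumes S: "semilattice S" and ind: "sl_ind S = zrank (zspan S)"
  obtains Tau where "finite Tau" "Tau \<subseteq> S"
    "\<And>s. s \<in> S \<Longrightarrow> \<exists>t\<in>insert 0 Tau. cong2 (zspan S) s t"
    "\<And>Q Q'. Q \<subseteq> Tau \<Longrightarrow> Q' \<subseteq> Tau \<Longrightarrow> cong2 (zspan S) (\<Sum>Q) (\<Sum>Q') \<Longrightarrow> Q = Q'"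
proof -
  let ?\<Lambda> = "zspan S"
  have \<Lambda>: "subgrp ?\<Lambda>" by (rule subgrp_zspan)
  obtain B where B: "finite B" "zindep B" "zspan B = ?\<Lambda>"
    using S fg_lattice_basis unfolding semilattice_def by blast
  have card_C: "card (coset2 ?\<Lambda> ` ?\<Lambda>) = 2 ^ card B"
    using card_cosets2_basis[OF B(1,2)] B(3) by simp
  define Cs where "Cs = coset2 ?\<Lambda> ` S"
  have "finite (coset2 ?\<Lambda> ` ?\<Lambda>)" using card_C by (intro card_ge_0_finite) simp
  then have "finite Cs" unfolding Cs_def using zspan_superset by (metis image_mono finite_subset)
  define c0 where "c0 = coset2 ?\<Lambda> 0"
  have "c0 \<in> Cs" unfolding c0_def Cs_def using semilattice_0[OF S] by blast
  then have card_Cs: "card (Cs - {c0}) = card B"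
    using ind zrank_basis[OF B(1,2)] \<open>finite Cs\<close> B(3) unfolding sl_ind_eq_card Cs_def by simp
  define rep where "rep c = (SOME s. s \<in> S \<and> coset2 ?\<Lambda> s = c)" for c
  have rep: "rep c \<in> S \<and> coset2 ?\<Lambda> (rep c) = c" if "c \<in> Cs" for c
    unfolding rep_def by (rule someI_ex) (use that in \<open>auto simp: Cs_def\<close>)
  define Tau where "Tau = rep ` (Cs - {c0})"
  have "inj_on rep (Cs - {c0})" by (rule inj_onI) (metis DiffD1 rep)
  then have card_Tau: "card Tau = card B" unfolding Tau_def using card_image card_Cs by metis
  have fin: "finite Tau" unfolding Tau_def using \<open>finite Cs\<close> by simp
  have Tau_S: "Tau \<subseteq> S" unfolding Tau_def using rep by blast
  have reps: "\<exists>t\<in>insert 0 Tau. cong2 ?\<Lambda> s t" if s: "s \<in> S" for s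
  proof (cases "coset2 ?\<Lambda> s = c0")
    case True
    then show ?thesis unfolding c0_def coset2_eq_iff[OF \<Lambda>] by blast
  next
    case False
    then have "coset2 ?\<Lambda> s \<in> Cs - {c0}" using s unfolding Cs_def by blast
    then show ?thesis
      using rep coset2_eq_iff[OF \<Lambda>] unfolding Tau_def by (metis DiffD1 imageI insertI2)
  qed
  have "\<forall>Q Q'. Q \<subseteq> Tau \<longrightarrow> Q' \<subseteq> Tau \<longrightarrow> cong2 ?\<Lambda> (\<Sum>Q) (\<Sum>Q') \<longrightarrow> Q = Q'"
    using Tau_S zspan_superset card_C card_Tau
    by (subst card_cosets2_eq_pow_iff[OF \<Lambda> fin, symmetric])
       (auto intro: cong2_zspan_reps[OF \<Lambda> fin _ reps])
  then show ?thesis using that fin Tau_S reps by blast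
qed

lemma semilattice_full_index_cong:
  assumes S: "semilattice S" and ind: "sl_ind S = zrank (zspan S)"
    and a: "a \<in> S" "b \<in> S" and F: "finite F" "g ` F \<subseteq> S"
    and sum: "a + b = (\<Sum>y\<in>F. of_int (c y) *\<^sub>R g y)"
  shows "cong2 (zspan S) a 0 \<or> cong2 (zspan S) a b \<or> (\<exists>y\<in>F. cong2 (zspan S) a (g y))"
proof -
  let ?\<Lambda> = "zspan S"
  have \<Lambda>: "subgrp ?\<Lambda>" by (rule subgrp_zspan)
  obtain Tau where Tau: "finite Tau" "Tau \<subseteq> S"
    and reps: "\<And>s. s \<in> S \<Longrightarrow> \<exists>t\<in>insert 0 Tau. cong2 ?\<Lambda> s t"
    and uniq: "\<And>Q Q'. Q \<subseteq> Tau \<Longrightarrow> Q' \<subseteq> Tau \<Longrightarrow> cong2 ?\<Lambda> (\<Sum>Q) (\<Sum>Q') \<Longrightarrow> Q = Q'"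
    using semilattice_full_index_reps[OF S ind] by blast
  define M where "M = {t \<in> Tau. \<exists>y\<in>F. cong2 ?\<Lambda> (g y) t}"
  have M: "finite M" "M \<subseteq> ?\<Lambda>" using Tau zspan_superset unfolding M_def by auto
  have "\<exists>t\<in>insert 0 M. cong2 ?\<Lambda> s t" if "s \<in> g ` F" for s
    using reps[of s] that F(2) unfolding M_def by blast
  moreover have "a + b \<in> zspan (g ` F)" unfolding sum by (rule zspan_sum_image[OF F(1)])
  ultimately obtain Q where Q: "Q \<subseteq> M" "cong2 ?\<Lambda> (a + b) (\<Sum>Q)"
    using cong2_zspan_reps[OF \<Lambda> M] by blast
  obtain ta tb where t: "ta \<in> insert 0 Tau" "cong2 ?\<Lambda> a ta" "tb \<in> insert 0 Tau" "cong2 ?\<Lambda> b tb"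
    using reps a by blast
  show ?thesis
  proof (rule ccontr)
    assume contra: "\<not> ?thesis"
    then have "ta \<noteq> 0" "ta \<noteq> tb" using t cong2_sym[OF \<Lambda>] cong2_trans[OF \<Lambda>] by blast+
    then have "\<Sum>({ta, tb} - {0}) = ta + tb" by (cases "tb = 0") (simp_all add: insert_Diff_if)
    moreover have "cong2 ?\<Lambda> (ta + tb) (\<Sum>Q)"
      using cong2_add[OF \<Lambda> t(2,4)] Q(2) cong2_sym[OF \<Lambda>] cong2_trans[OF \<Lambda>] by blast
    ultimately have "{ta, tb} - {0} = Q" using uniq[of "{ta, tb} - {0}" Q] t(1,3) Q(1) M_def by auto
    then have "ta \<in> M" using \<open>ta \<noteq> 0\<close> Q(1) by blast
    then show False using contra t(2) cong2_sym[OF \<Lambda>] cong2_trans[OF \<Lambda>] unfolding M_def by blast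
  qed
qed

lemma additive_semilattice_sums:
  assumes S: "semilattice S" and add: "\<forall>s\<in>S. \<forall>t\<in>S. s + t \<in> S" and W: "subgrp W"
  shows "msum S S \<inter> zspan (S \<inter> W) \<subseteq> msum (S \<inter> W) (S \<inter> W)"
proof -
  have "subgrp S"
    unfolding subgrp_def using add semilattice_0[OF S] semilattice_neg[OF S]
    by (metis diff_conv_add_uminus)
  then have span: "zspan (S \<inter> W) = S \<inter> W" using W by (simp add: subgrp_Int zspan_subgrp)
  show ?thesis
  proof
    fix x assume "x \<in> msum S S \<inter> zspan (S \<inter> W)"
    then have "x \<in> S \<inter> W" unfolding span by blast
    moreover have "0 \<in> S \<inter> W" using semilattice_0[OF S] subgrp_0[OF W] by blast
    ultimately show "x \<in> msum (S \<inter> W) (S \<inter> W)"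
      unfolding msum_def by (intro CollectI exI[of _ x] exI[of _ 0]) simp
  qed
qed

lemma direct_sum_component:
  assumes G: "subgrp G" and H: "subgrp H" and disj: "G \<inter> H = {0}" and F: "finite F"
    and a: "a \<in> G" and b: "b \<in> H" and p: "\<And>y. y \<in> F \<Longrightarrow> p y \<in> G \<and> y - p y \<in> H"
    and sum: "a + b = (\<Sum>y\<in>F. of_int (c y) *\<^sub>R y)"
  shows "a = (\<Sum>y\<in>F. of_int (c y) *\<^sub>R p y)"
proof -
  have "a - (\<Sum>y\<in>F. of_int (c y) *\<^sub>R p y) \<in> G"
    using a p by (intro subgrp_diff[OF G] subgrp_sum[OF G F] subgrp_scaleR_int[OF G]) auto
  moreover have "(\<Sum>y\<in>F. of_int (c y) *\<^sub>R (y - p y)) \<in> H"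
    using p by (intro subgrp_sum[OF H F] subgrp_scaleR_int[OF H]) auto
  then have "(\<Sum>y\<in>F. of_int (c y) *\<^sub>R (y - p y)) - b \<in> H" using b subgrp_diff[OF H] by blast
  moreover have "a - (\<Sum>y\<in>F. of_int (c y) *\<^sub>R p y) = (\<Sum>y\<in>F. of_int (c y) *\<^sub>R (y - p y)) - b"
    using sum by (simp add: scaleR_diff_right sum_subtractf algebra_simps)
  ultimately have "a - (\<Sum>y\<in>F. of_int (c y) *\<^sub>R p y) \<in> G \<inter> H" by (metis IntI)
  then show ?thesis using disj by simp
qed

definition full_index_split :: "'a::real_vector set \<Rightarrow> bool" where
  "full_index_split S \<longleftrightarrow> (\<exists>\<Lambda>2 S1. subgrp \<Lambda>2 \<and> zspan S1 \<inter> \<Lambda>2 = {0} \<and> semilattice S1 \<and>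
     sl_ind S1 = zrank (zspan S1) \<and> S = msum S1 \<Lambda>2)"

lemma full_index_split_self:
  assumes "semilattice S" "sl_ind S = zrank (zspan S)"
  shows "full_index_split S"
  unfolding full_index_split_def
proof (rule exI[of _ "{0}"], rule exI[of _ S], intro conjI)
  show "subgrp {0}" unfolding subgrp_def by simp
  show "zspan S \<inter> {0} = {0}" using zspan_0 by blast
  show "S = msum S {0}" unfolding msum_def by auto
qed (use assms in auto)

text \<open>Write x = (a1 + b1) + (a2 + b2) and x = \<Sum> c(y) y with y = a(y) + b(y) \<in> S \<inter> W.
  Comparing S1-components, a1 + a2 = \<Sum> c(y) a(y); modulo twice the lattice of S1 either
  a1 + a2 \<in> S1 (so x \<in> S), or a1 is congruent to some a(y), and then x - y \<in> S.\<close>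
lemma full_index_semilattice_sums:
  assumes split: "full_index_split S" and W: "subgrp W"
  shows "msum S S \<inter> zspan (S \<inter> W) \<subseteq> msum (S \<inter> W) (S \<inter> W)"
proof
  obtain \<Lambda>2 S1 where \<Lambda>2: "subgrp \<Lambda>2" and disj: "zspan S1 \<inter> \<Lambda>2 = {0}"
    and S1: "semilattice S1" and ind: "sl_ind S1 = zrank (zspan S1)" and S: "S = msum S1 \<Lambda>2"
    using split unfolding full_index_split_def by blast
  fix x assume "x \<in> msum S S \<inter> zspan (S \<inter> W)"
  then have xS: "x \<in> msum S S" and xW: "x \<in> zspan (S \<inter> W)" by auto
  let ?\<Lambda>1 = "zspan S1"
  have \<Lambda>1: "subgrp ?\<Lambda>1" by (rule subgrp_zspan)
  have S1_\<Lambda>1: "S1 \<subseteq> ?\<Lambda>1" by (rule zspan_superset)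
  obtain a1 b1 a2 b2 where ab: "a1 \<in> S1" "b1 \<in> \<Lambda>2" "a2 \<in> S1" "b2 \<in> \<Lambda>2"
    "x = (a1 + b1) + (a2 + b2)"
    using xS unfolding S msum_def by blast
  obtain F c where F: "finite F" "F \<subseteq> S \<inter> W" "x = (\<Sum>y\<in>F. of_int (c y) *\<^sub>R y)"
    using xW unfolding zspan_def by blast
  define a where "a y = (SOME a. a \<in> S1 \<and> y - a \<in> \<Lambda>2)" for y
  have a: "a y \<in> S1 \<and> y - a y \<in> \<Lambda>2" if "y \<in> S" for y
    unfolding a_def by (rule someI_ex) (use that S in \<open>auto simp: msum_def\<close>)
  have a12: "a1 + a2 = (\<Sum>y\<in>F. of_int (c y) *\<^sub>R a y)"
  proof (rule direct_sum_component[OF \<Lambda>1 \<Lambda>2 disj F(1)])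
    show "a1 + a2 \<in> ?\<Lambda>1" "b1 + b2 \<in> \<Lambda>2"
      using ab S1_\<Lambda>1 subgrp_add[OF \<Lambda>1] subgrp_add[OF \<Lambda>2] by blast+
    show "a y \<in> ?\<Lambda>1 \<and> y - a y \<in> \<Lambda>2" if "y \<in> F" for y
      using a that F(2) S1_\<Lambda>1 by blast
    show "(a1 + a2) + (b1 + b2) = (\<Sum>y\<in>F. of_int (c y) *\<^sub>R y)"
      using ab(5) F(3) by (simp add: algebra_simps)
  qed
  have x_W: "x \<in> W" using xW zspan_minimal[OF W, of "S \<inter> W"] by blast
  have S_0: "0 \<in> S" using semilattice_0[OF S1] subgrp_0[OF \<Lambda>2] unfolding S msum_def by force
  have "cong2 ?\<Lambda>1 a1 0 \<or> cong2 ?\<Lambda>1 a1 a2 \<or> (\<exists>y\<in>F. cong2 ?\<Lambda>1 a1 (a y))"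
    using semilattice_full_index_cong[OF S1 ind ab(1,3) F(1) _ a12] a F(2) by blast
  then consider "cong2 ?\<Lambda>1 a1 0 \<or> cong2 ?\<Lambda>1 a1 a2" | "\<exists>y\<in>F. cong2 ?\<Lambda>1 a1 (a y)"
    by blast
  then show "x \<in> msum (S \<inter> W) (S \<inter> W)"
  proof cases
    case 1
    then have "a1 + a2 \<in> S1" using semilattice_add_mem[OF S1 ab(1,3)] by blast
    moreover have "x = (a1 + a2) + (b1 + b2)" using ab(5) by (simp add: algebra_simps)
    ultimately have "x \<in> S" using subgrp_add[OF \<Lambda>2 ab(2,4)] unfolding S msum_def by blast
    then show ?thesis using x_W S_0 subgrp_0[OF W] unfolding msum_def by force
  next
    case 2
    then obtain y w where y: "y \<in> F" "w \<in> ?\<Lambda>1" "a1 - a y = 2 *\<^sub>R w"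
      unfolding cong2_def by blast
    have yS: "y \<in> S" "y \<in> W" using y(1) F(2) by auto
    have "a2 + 2 *\<^sub>R w \<in> S1" by (rule semilattice_add_double[OF S1 ab(3) y(2)])
    moreover have "b1 + b2 - (y - a y) \<in> \<Lambda>2"
      using ab(2,4) a[OF yS(1)] subgrp_diff[OF \<Lambda>2] subgrp_add[OF \<Lambda>2] by blast
    moreover have "x - y = (a2 + 2 *\<^sub>R w) + (b1 + b2 - (y - a y))"
      using ab(5) y(3) by (simp add: algebra_simps)
    ultimately have "x - y \<in> S \<inter> W"
      using subgrp_diff[OF W x_W yS(2)] unfolding S msum_def by blast
    then show ?thesis
      using yS unfolding msum_def by (intro CollectI exI[of _ y] exI[of _ "x - y"]) auto
  qed
qed

section \<open>Finite root systems\<close>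

lemma psd_form_isotropic:
  assumes f: "psd_form B" and s: "B s s = 0"
  shows "B s x = 0"
proof (rule ccontr)
  assume ne: "B s x \<noteq> 0"
  have bl: "bilinear B" and sym: "\<And>x y. B x y = B y x" and pos: "\<And>x. 0 \<le> B x x"
    using f unfolding psd_form_def by auto
  define t where "t = - (B x x + 1) / (2 * B s x)"
  have "B (x + t *\<^sub>R s) (x + t *\<^sub>R s) = B x x + t * B x s + t * B s x + t * t * B s s"
    by (simp add: bilinear_ladd[OF bl] bilinear_radd[OF bl] bilinear_lmul[OF bl]
        bilinear_rmul[OF bl] algebra_simps)
  also have "\<dots> = B x x + 2 * t * B s x" using s sym[of x s] by simp
  also have "\<dots> = -1" using ne by (simp add: t_def field_simps)
  finally show False using pos[of "x + t *\<^sub>R s"] by simp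
qed

locale finite_rs =
  fixes B :: "'a::real_vector \<Rightarrow> 'a \<Rightarrow> real" and Rd :: "'a set"
  assumes form: "psd_form B" and frs: "finite_root_system B Rd" and red: "reduced_rs Rd"
begin

abbreviation "Rsh \<equiv> short_roots B Rd"
abbreviation "Rlg \<equiv> long_roots B Rd"

lemma B_bilinear: "bilinear B"
  using form unfolding psd_form_def by auto

lemma B_sym: "B x y = B y x"
  using form unfolding psd_form_def by auto

lemmas B_simps = bilinear_ladd[OF B_bilinear] bilinear_radd[OF B_bilinear]
  bilinear_lmul[OF B_bilinear] bilinear_rmul[OF B_bilinear]
  bilinear_lsub[OF B_bilinear] bilinear_rsub[OF B_bilinear]
  bilinear_lneg[OF B_bilinear] bilinear_rneg[OF B_bilinear]
  bilinear_lzero[OF B_bilinear] bilinear_rzero[OF B_bilinear]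

lemma B_pos_span: "x \<in> span Rd \<Longrightarrow> x \<noteq> 0 \<Longrightarrow> 0 < B x x"
  using frs unfolding finite_root_system_def by blast

lemma root_pos: "a \<in> Rd - {0} \<Longrightarrow> 0 < B a a"
  using B_pos_span span_base by blast

lemma finite_roots: "finite Rd"
  using frs unfolding finite_root_system_def by blast

lemma zero_root: "0 \<in> Rd"
  using frs unfolding finite_root_system_def by blast

lemma root_reflection:
  "a \<in> Rd - {0} \<Longrightarrow> b \<in> Rd \<Longrightarrow> 2 * B b a / B a a \<in> \<int> \<and> b - (2 * B b a / B a a) *\<^sub>R a \<in> Rd"
  using frs unfolding finite_root_system_def by blast

lemma root_neg:
  assumes a: "a \<in> Rd"
  shows "- a \<in> Rd"
proof (cases "a = 0")
  case True
  then show ?thesis using a by simp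
next
  case False
  then have "a - (2 * B a a / B a a) *\<^sub>R a \<in> Rd" using root_reflection a by blast
  moreover have "2 * B a a / B a a = 2" using root_pos[of a] a False by simp
  ultimately show ?thesis by (simp add: scaleR_2)
qed

lemma short_roots_subset: "Rsh \<subseteq> Rd - {0}"
  unfolding short_roots_def by blast

lemma long_roots_subset: "Rlg \<subseteq> Rd - {0}"
  unfolding long_roots_def short_roots_def by blast

lemma short_long_cover: "Rd - {0} = Rsh \<union> Rlg"
  unfolding long_roots_def short_roots_def by blast

lemma short_long_disjoint: "Rsh \<inter> Rlg = {}"
  unfolding long_roots_def by blast

lemma short_le: "a \<in> Rsh \<Longrightarrow> b \<in> Rd - {0} \<Longrightarrow> B a a \<le> B b b"
  unfolding short_roots_def by blast

lemma short_roots_norm: "a \<in> Rsh \<Longrightarrow> b \<in> Rsh \<Longrightarrow> B a a = B b b"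
  using short_le short_roots_subset by (meson antisym subsetD)

lemma short_rootI: "x \<in> Rd - {0} \<Longrightarrow> a \<in> Rsh \<Longrightarrow> B x x = B a a \<Longrightarrow> x \<in> Rsh"
  unfolding short_roots_def by auto

lemma short_lt_long:
  assumes b: "b \<in> Rlg" and a: "a \<in> Rsh"
  shows "B a a < B b b"
proof -
  have "b \<in> Rd - {0}" "b \<notin> Rsh" using b unfolding long_roots_def by auto
  then obtain c where c: "c \<in> Rd - {0}" "B c c < B b b" unfolding short_roots_def by force
  then show ?thesis using short_le[OF a c(1)] by simp
qed

lemma short_roots_neg: "a \<in> Rsh \<Longrightarrow> - a \<in> Rsh"
  unfolding short_roots_def using root_neg by (auto simp: B_simps)

lemma long_roots_neg: "a \<in> Rlg \<Longrightarrow> - a \<in> Rlg"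
  using long_roots_subset root_neg short_roots_neg[of "- a"] short_long_cover
  unfolding long_roots_def by auto

lemma roots_not_proportional:
  assumes "a \<in> Rd - {0}" "b \<in> Rd - {0}" "b \<noteq> a" "b \<noteq> - a"
  shows "b \<noteq> t *\<^sub>R a"
proof
  assume e: "b = t *\<^sub>R a"
  then have "t = 1 \<or> t = -1" using red assms(1,2) unfolding reduced_rs_def by blast
  then show False using e assms(3,4) by auto
qed

lemma cauchy_schwarz_strict:
  assumes "a \<in> span Rd" "b \<in> span Rd" "a \<noteq> 0" "\<And>t. b \<noteq> t *\<^sub>R a"
  shows "(B a b)\<^sup>2 < B a a * B b b"
proof -
  have aa: "B a a > 0" using B_pos_span assms by blast
  define t where "t = B a b / B a a"
  have "b - t *\<^sub>R a \<noteq> 0" using assms(4) by auto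
  moreover have "b - t *\<^sub>R a \<in> span Rd" using assms(1,2) by (simp add: span_diff span_scale)
  ultimately have "0 < B (b - t *\<^sub>R a) (b - t *\<^sub>R a)" using B_pos_span by blast
  also have "B (b - t *\<^sub>R a) (b - t *\<^sub>R a) = B b b - 2 * t * B a b + t * t * B a a"
    by (simp add: B_simps B_sym[of b a] algebra_simps)
  also have "\<dots> = B b b - (B a b)\<^sup>2 / B a a"
    using aa by (simp add: t_def field_simps power2_eq_square)
  finally show ?thesis using aa by (simp add: field_simps)
qed

text \<open>The Cartan integer n = 2(a,b)/(b,b) is negative, and n^2 < 4 (a,a)/(b,b) \<le> 4 by the
  strict Cauchy-Schwarz inequality; hence n = -1 and a + b is the reflection of a in b.\<close>
lemma obtuse_roots_sum:
  assumes a: "a \<in> Rd - {0}" and b: "b \<in> Rd - {0}" and np: "\<And>t. b \<noteq> t *\<^sub>R a"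
    and neg: "B a b < 0" and le: "B a a \<le> B b b"
  shows "a + b \<in> Rd" "B (a + b) (a + b) = B a a"
proof -
  have bb: "B b b > 0" using root_pos b by blast
  define n where "n = 2 * B a b / B b b"
  have nZ: "n \<in> \<int>" and nR: "a - n *\<^sub>R b \<in> Rd"
    using root_reflection[OF b, of a] a unfolding n_def by auto
  have "(B a b)\<^sup>2 < B a a * B b b"
    using cauchy_schwarz_strict[of a b] a b np span_base by blast
  then have "n\<^sup>2 < 4 * B a a / B b b"
    using bb unfolding n_def
    by (simp add: power_divide power_mult_distrib field_simps power2_eq_square)
  also have "\<dots> \<le> 4" using le bb by (simp add: divide_le_eq)
  finally have n2: "n\<^sup>2 < 4" .
  have "n < 0" unfolding n_def using neg bb by (simp add: divide_neg_pos)
  obtain k where k: "n = of_int k" using nZ Ints_cases by blast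
  have "k < 0" using \<open>n < 0\<close> k by simp
  moreover have "k \<ge> -1"
  proof (rule ccontr)
    assume "\<not> k \<ge> -1"
    then have "2\<^sup>2 \<le> (- k)\<^sup>2" by (intro power_mono) auto
    then have "4 \<le> k\<^sup>2" by simp
    then have "4 \<le> n\<^sup>2" using k by (metis of_int_le_iff of_int_numeral of_int_power)
    then show False using n2 by simp
  qed
  ultimately have "k = -1" by simp
  then have n1: "n = -1" using k by simp
  then show "a + b \<in> Rd" using nR by simp
  have "2 * B a b = - B b b" using n1 bb unfolding n_def by (simp add: divide_eq_eq)
  then show "B (a + b) (a + b) = B a a" using B_sym[of b a] by (simp add: B_simps)
qed

lemma short_obtuse_sum:
  assumes a: "a \<in> Rsh" and b: "b \<in> Rd - {0}" "b \<noteq> a" "b \<noteq> - a" and neg: "B a b < 0"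
  shows "a + b \<in> Rsh"
proof -
  have a0: "a \<in> Rd - {0}" using a short_roots_subset by blast
  have sum: "a + b \<in> Rd" "B (a + b) (a + b) = B a a"
    using obtuse_roots_sum[OF a0 b(1) roots_not_proportional[OF a0 b] neg short_le[OF a b(1)]]
    by auto
  have "a + b \<noteq> 0"
  proof
    assume "a + b = 0"
    then have "B a a = 0" using sum(2) by (simp add: B_simps)
    then show False using root_pos[OF a0] by simp
  qed
  then show ?thesis using short_rootI[OF _ a sum(2)] sum(1) by blast
qed

lemma long_ne_short: "b \<in> Rlg \<Longrightarrow> a \<in> Rsh \<Longrightarrow> b \<noteq> a \<and> b \<noteq> - a"
  using short_lt_long[of b a] by (auto simp: B_simps)

lemma orthogonal_independent:
  assumes P: "P \<subseteq> Rd - {0}" and orth: "\<And>x y. x \<in> P \<Longrightarrow> y \<in> P \<Longrightarrow> x \<noteq> y \<Longrightarrow> B x y = 0"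
  shows "independent P"
proof
  assume "dependent P"
  then obtain t u w where tu: "finite t" "t \<subseteq> P" "(\<Sum>v\<in>t. u v *\<^sub>R v) = 0" "w \<in> t" "u w \<noteq> 0"
    unfolding dependent_explicit by blast
  have "0 = B (\<Sum>v\<in>t. u v *\<^sub>R v) w" using tu(3) by (simp add: B_simps)
  also have "\<dots> = (\<Sum>v\<in>t. u v * B v w)"
    using tu(1) by (induction t rule: finite_induct) (simp_all add: B_simps)
  also have "\<dots> = u w * B w w + (\<Sum>v\<in>t - {w}. u v * B v w)"
    using tu(1,4) by (simp add: sum.remove)
  also have "(\<Sum>v\<in>t - {w}. u v * B v w) = 0"
    using tu(2,4) orth by (intro sum.neutral) auto
  finally have "u w * B w w = 0" by simp
  then show False using root_pos[of w] tu(2,4,5) P by auto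
qed

end

context finite_rs
begin

lemma long_root_short_decomp:
  assumes b: "b \<in> Rlg" and e: "e \<in> Rsh" and ne: "B e b \<noteq> 0"
  obtains x y where "x \<in> Rsh" "y \<in> Rsh" "y \<noteq> x" "y \<noteq> - x" "b = x + y" "y = e \<or> y = - e"
proof -
  define e1 where "e1 = (if B e b < 0 then e else - e)"
  have e1: "e1 \<in> Rsh" "B e1 b < 0"
    using e ne short_roots_neg unfolding e1_def by (auto simp: B_simps)
  have b0: "b \<in> Rd - {0}" using b long_roots_subset by blast
  have e10: "e1 \<in> Rd - {0}" using e1(1) short_roots_subset by blast
  have "b \<noteq> e1" "b \<noteq> - e1" using long_ne_short[OF b e1(1)] by auto
  then have x: "e1 + b \<in> Rsh" and np: "\<And>t. b \<noteq> t *\<^sub>R e1"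
    using short_obtuse_sum[OF e1(1) b0 _ _ e1(2)] roots_not_proportional[OF e10 b0] by auto
  have "- e1 \<noteq> e1 + b" using np[of "-2"] by (auto simp: scaleR_2 algebra_simps)
  moreover have "- e1 \<noteq> - (e1 + b)" using b0 by auto
  moreover have "- e1 = e \<or> - e1 = - e" unfolding e1_def by auto
  ultimately show ?thesis using that[OF x short_roots_neg[OF e1(1)]] by auto
qed

end

locale irreducible_rs = finite_rs +
  assumes roots_nonzero: "Rd - {0} \<noteq> {}"
    and irreducible: "\<And>A C. A \<union> C = Rd - {0} \<Longrightarrow> (\<And>a c. a \<in> A \<Longrightarrow> c \<in> C \<Longrightarrow> B a c = 0)
      \<Longrightarrow> A = {} \<or> C = {}"
begin

lemma short_roots_nonempty: "Rsh \<noteq> {}"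
proof -
  obtain a where "is_arg_min (\<lambda>a. B a a) (\<lambda>a. a \<in> Rd - {0}) a"
    using ex_is_arg_min_if_finite[of "Rd - {0}"] finite_roots roots_nonzero by blast
  then have "a \<in> Rsh" unfolding is_arg_min_def short_roots_def by force
  then show ?thesis by blast
qed

lemma long_root_nonorthogonal_short:
  assumes b: "b \<in> Rlg"
  obtains e where "e \<in> Rsh" "B e b \<noteq> 0"
proof -
  define A where "A = {g \<in> Rlg. \<forall>e\<in>Rsh. B e g = 0}"
  have "B a c = 0" if a: "a \<in> A" and c: "c \<in> (Rd - {0}) - A" for a c
  proof (cases "c \<in> Rsh")
    case True
    then show ?thesis using a B_sym[of a c] unfolding A_def by auto
  next
    case False
    then have "c \<in> Rlg" using c short_long_cover by blast
    moreover obtain e where "e \<in> Rsh" "B e c \<noteq> 0" using c \<open>c \<in> Rlg\<close> unfolding A_def by blast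
    ultimately obtain x y where "x \<in> Rsh" "y \<in> Rsh" "c = x + y"
      by (rule long_root_short_decomp)
    then show ?thesis using a B_sym[of a x] B_sym[of a y] unfolding A_def by (simp add: B_simps)
  qed
  moreover have "A \<union> ((Rd - {0}) - A) = Rd - {0}"
    unfolding A_def using long_roots_subset by blast
  moreover have "(Rd - {0}) - A \<noteq> {}"
    using short_roots_nonempty short_roots_subset short_long_disjoint unfolding A_def by blast
  ultimately have "b \<notin> A" using irreducible b by blast
  then show ?thesis using that b unfolding A_def by blast
qed

lemma long_root_short_sum:
  "b \<in> Rlg \<Longrightarrow> \<exists>x\<in>Rsh. \<exists>y\<in>Rsh. y \<noteq> x \<and> y \<noteq> - x \<and> b = x + y"
  by (metis long_root_nonorthogonal_short long_root_short_decomp)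

lemma obtuse_short_long:
  assumes "Rlg \<noteq> {}"
  obtains a b where "a \<in> Rsh" "b \<in> Rlg" "B a b < 0"
proof -
  obtain b0 a where "b0 \<in> Rlg" "a \<in> Rsh" "B a b0 \<noteq> 0"
    using assms long_root_nonorthogonal_short by blast
  then show ?thesis
    using that[of a b0] that[of a "- b0"] long_roots_neg by (force simp: B_simps)
qed

end

text \<open>These are exactly the irreducible root systems of type A_1 and B_l.\<close>
locale short_orthogonal_rs = irreducible_rs +
  assumes short_orthogonal: "\<And>a b. a \<in> Rsh \<Longrightarrow> b \<in> Rsh \<Longrightarrow> b \<noteq> a \<Longrightarrow> b \<noteq> - a \<Longrightarrow> B a b = 0"
begin

lemma short_sum_diff:
  assumes x: "x \<in> Rsh" and y: "y \<in> Rsh" and ne: "y \<noteq> x" "y \<noteq> - x" and s: "x + y \<in> Rd"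
  shows "x - y \<in> Rd"
proof -
  have y0: "y \<in> Rd - {0}" using y short_roots_subset by blast
  have "2 * B (x + y) y / B y y = 2"
    using short_orthogonal[OF x y ne] root_pos[OF y0] by (simp add: B_simps)
  then have "x + y - 2 *\<^sub>R y \<in> Rd" using root_reflection[OF y0 s] by simp
  then show ?thesis by (simp add: scaleR_2 algebra_simps)
qed

lemma short_sum_trans:
  assumes x: "x \<in> Rsh" and y: "y \<in> Rsh" and z: "z \<in> Rsh"
    and nxy: "y \<noteq> x" "y \<noteq> - x" and nyz: "z \<noteq> y" "z \<noteq> - y" and nxz: "z \<noteq> x" "z \<noteq> - x"
    and s1: "x + y \<in> Rd" and s2: "y + z \<in> Rd"
  shows "x + z \<in> Rd"
proof -
  have xy: "x - y \<in> Rd" using short_sum_diff[OF x y nxy s1] .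
  have yy: "B y y > 0" using root_pos y short_roots_subset by blast
  have gg: "B (y + z) (y + z) = 2 * B y y"
    using short_orthogonal[OF y z nyz] short_roots_norm[OF z y] B_sym[of z y] by (simp add: B_simps)
  have "y + z \<noteq> 0" using nyz(2) by (metis add_eq_0_iff)
  then have g0: "y + z \<in> Rd - {0}" using s2 by blast
  have "B (x - y) (y + z) = - B y y"
    using short_orthogonal[OF x y nxy] short_orthogonal[OF x z nxz] short_orthogonal[OF y z nyz]
    by (simp add: B_simps)
  then have "2 * B (x - y) (y + z) / B (y + z) (y + z) = -1" using gg yy by simp
  then have "(x - y) - (-1) *\<^sub>R (y + z) \<in> Rd" using root_reflection[OF g0 xy] by simp
  then show ?thesis by (simp add: algebra_simps)
qed

definition linked :: "'a \<Rightarrow> 'a set" where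
  "linked e0 = {x \<in> Rsh. x = e0 \<or> x = - e0 \<or> x + e0 \<in> Rd}"

lemma linked_neg:
  assumes e0: "e0 \<in> Rsh" and y: "y \<in> linked e0"
  shows "- y \<in> linked e0"
proof -
  have yS: "y \<in> Rsh" using y unfolding linked_def by blast
  consider "y = e0" | "y = - e0" | "y \<noteq> e0" "y \<noteq> - e0" "y + e0 \<in> Rd"
    using y unfolding linked_def by blast
  then show ?thesis
  proof cases
    case 3
    then have "e0 - y \<in> Rd" using short_sum_diff[OF e0 yS] by (auto simp: add.commute)
    then show ?thesis using short_roots_neg[OF yS] unfolding linked_def by (simp add: algebra_simps)
  qed (use e0 short_roots_neg in \<open>auto simp: linked_def\<close>)
qed

lemma linked_step:
  assumes e0: "e0 \<in> Rsh" and y: "y \<in> linked e0"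
    and u: "u \<in> Rsh" "u \<noteq> y" "u \<noteq> - y" "u + y \<in> Rd"
  shows "u \<in> linked e0"
proof (cases "u = e0 \<or> u = - e0")
  case True
  then show ?thesis unfolding linked_def using u(1) by blast
next
  case False
  have yS: "y \<in> Rsh" using y unfolding linked_def by blast
  consider "y = e0" | "y = - e0" | "y \<noteq> e0" "y \<noteq> - e0" "y + e0 \<in> Rd"
    using y unfolding linked_def by blast
  then show ?thesis
  proof cases
    case 1
    then show ?thesis using u unfolding linked_def by blast
  next
    case 2
    then have "u - (- e0) \<in> Rd"
      using short_sum_diff[OF u(1) short_roots_neg[OF e0]] False u(4) by auto
    then show ?thesis unfolding linked_def using u(1) by simp
  next
    case 3
    have "u + e0 \<in> Rd"
      by (rule short_sum_trans[OF u(1) yS e0]) (use u 3 False in \<open>auto simp: add.commute\<close>)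
    then show ?thesis unfolding linked_def using u(1) by blast
  qed
qed

lemma long_root_linked_sum:
  assumes e0: "e0 \<in> Rsh" and b: "b \<in> Rlg" and e: "e \<in> linked e0" "B e b \<noteq> 0"
  shows "\<exists>p\<in>linked e0. \<exists>q\<in>linked e0. b = p + q"
proof -
  have eS: "e \<in> Rsh" using e unfolding linked_def by blast
  obtain p q where pq: "p \<in> Rsh" "q \<in> Rsh" "q \<noteq> p" "q \<noteq> - p" "b = p + q" "q = e \<or> q = - e"
    using long_root_short_decomp[OF b eS e(2)] by blast
  have q: "q \<in> linked e0" using pq(6) e(1) linked_neg[OF e0] by blast
  have "p + q \<in> Rd" using pq(5) b long_roots_subset by blast
  then have "p \<in> linked e0" using linked_step[OF e0 q pq(1)] pq(3,4) by (metis minus_minus)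
  then show ?thesis using q pq(5) by blast
qed

text \<open>By irreducibility every short root other than \<pm>e0 is linked to e0: otherwise the linked
  roots together with the long roots they are not orthogonal to would split off.\<close>
lemma short_sum_root:
  assumes x: "x \<in> Rsh" and e0: "e0 \<in> Rsh" and ne: "x \<noteq> e0" "x \<noteq> - e0"
  shows "x + e0 \<in> Rd"
proof -
  let ?K = "linked e0"
  have KS: "?K \<subseteq> Rsh" unfolding linked_def by blast
  define A where "A = ?K \<union> {a \<in> Rlg. \<exists>e\<in>?K. B e a \<noteq> 0}"
  have A_sum: "\<exists>p\<in>?K. \<exists>q\<in>?K. a = p + q" if "a \<in> A" "a \<notin> ?K" for a
    using that long_root_linked_sum[OF e0] unfolding A_def by blast
  have "B a c = 0" if a: "a \<in> A" and c: "c \<in> (Rd - {0}) - A" for a c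
  proof -
    have orth_K: "B p c = 0" if p: "p \<in> ?K" for p
    proof (cases "c \<in> Rsh")
      case True
      have "c \<noteq> p" "c \<noteq> - p" using c p linked_neg[OF e0 p] unfolding A_def by auto
      then show ?thesis using short_orthogonal[OF _ True] p KS by blast
    next
      case False
      then show ?thesis using c p short_long_cover unfolding A_def by blast
    qed
    show ?thesis
      using a A_sum[OF a] orth_K by (cases "a \<in> ?K") (auto simp: B_simps)
  qed
  moreover have "A \<union> ((Rd - {0}) - A) = Rd - {0}"
    unfolding A_def using KS short_roots_subset long_roots_subset by blast
  moreover have "A \<noteq> {}" using e0 unfolding A_def linked_def by blast
  ultimately have "x \<in> A" using irreducible x short_roots_subset by blast
  then show ?thesis using ne x short_long_disjoint unfolding A_def linked_def by blast
qed

end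

lemma sign_representatives:
  fixes X :: "'a::real_vector set"
  assumes neg: "\<And>x. x \<in> X \<Longrightarrow> - x \<in> X" and X0: "0 \<notin> X"
  shows "\<exists>P\<subseteq>X. (\<forall>x\<in>X. x \<in> P \<or> - x \<in> P) \<and> (\<forall>x\<in>P. - x \<notin> P)"
proof -
  define \<sigma> where "\<sigma> x = (SOME y. y = x \<or> y = - x)" for x :: 'a
  have \<sigma>: "\<sigma> x = x \<or> \<sigma> x = - x" for x unfolding \<sigma>_def by (rule someI[of _ x]) simp
  have \<sigma>_neg: "\<sigma> (- x) = \<sigma> x" for x
  proof -
    have "(\<lambda>y. y = - x \<or> y = - (- x)) = (\<lambda>y. y = x \<or> y = - x)" by (rule ext) auto
    then show ?thesis unfolding \<sigma>_def by simp
  qed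
  define P where "P = {x \<in> X. \<sigma> x = x}"
  have "x \<in> P \<or> - x \<in> P" if "x \<in> X" for x
    using \<sigma>[of x] \<sigma>_neg[of x] that neg[OF that] unfolding P_def by auto
  moreover have "- x \<notin> P" if "x \<in> P" for x
  proof
    assume "- x \<in> P"
    then have "x = - x" using that \<sigma>_neg[of x] unfolding P_def by auto
    then have "2 *\<^sub>R x = 0" by (metis add.right_inverse scaleR_2)
    then show False using that X0 unfolding P_def by auto
  qed
  moreover have "P \<subseteq> X" unfolding P_def by blast
  ultimately show ?thesis by (intro exI[of _ P] conjI ballI) auto
qed

context short_orthogonal_rs
begin

lemma type_A1_if_no_long_roots:
  assumes "Rlg = {}"
  shows "type_A1 Rd"
proof -
  obtain a where a: "a \<in> Rsh" using short_roots_nonempty by blast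
  have "a \<in> Rd - {0}" "- a \<in> Rd - {0}" using a short_roots_neg[OF a] short_roots_subset by auto
  then have A: "{a, - a} \<subseteq> Rd - {0}" by simp
  have orth: "B x c = 0" if "x \<in> {a, - a}" "c \<in> (Rd - {0}) - {a, - a}" for x c
    using that a short_roots_neg short_orthogonal assms short_long_cover by auto
  have "{a, - a} \<union> ((Rd - {0}) - {a, - a}) = Rd - {0}" using A by blast
  from irreducible[OF this orth] have "(Rd - {0}) - {a, - a} = {}" by blast
  then have "Rd = {0, a, - a}" using A zero_root by blast
  then show ?thesis unfolding type_A1_def using A by blast
qed

text \<open>Choosing one of each pair \<pm>x of short roots gives an orthogonal, hence linearly
  independent, family e_0, ..., e_(l-1) with Rsh = {\<pm>e_i}.\<close>
lemma short_roots_signed_basis: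
  obtains h :: "nat \<Rightarrow> 'a" and l :: nat where "inj_on h {..<l}" "independent (h ` {..<l})"
    "\<And>x. x \<in> Rsh \<Longrightarrow> \<exists>s i. s \<in> {1, -1} \<and> i < l \<and> x = s *\<^sub>R h i"
    "\<And>s i. s \<in> {1, -1} \<Longrightarrow> i < l \<Longrightarrow> s *\<^sub>R h i \<in> Rsh"
    "\<And>s t i j. s \<in> {1, -1} \<Longrightarrow> t \<in> {1, -1} \<Longrightarrow> i < l \<Longrightarrow> j < l \<Longrightarrow>
      t *\<^sub>R h j \<noteq> s *\<^sub>R h i \<and> t *\<^sub>R h j \<noteq> - (s *\<^sub>R h i) \<longleftrightarrow> i \<noteq> j"
proof -
  have "0 \<notin> Rsh" using short_roots_subset by blast
  with short_roots_neg have "\<exists>P\<subseteq>Rsh. (\<forall>x\<in>Rsh. x \<in> P \<or> - x \<in> P) \<and> (\<forall>x\<in>P. - x \<notin> P)"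
    by (rule sign_representatives)
  then obtain P where P: "P \<subseteq> Rsh" "\<forall>x\<in>Rsh. x \<in> P \<or> - x \<in> P" "\<forall>x\<in>P. - x \<notin> P"
    by blast
  define l where "l = card P"
  have "P \<subseteq> Rd" using P(1) short_roots_subset by blast
  then have "finite P" using finite_roots by (rule finite_subset)
  then obtain h where h: "bij_betw h {..<l} P"
    using ex_bij_betw_nat_finite unfolding l_def lessThan_atLeast0 by blast
  have hP: "h i \<in> P" if "i < l" for i using h that by (auto simp: bij_betw_def)
  have short_rep: "\<exists>s i. s \<in> {1, -1} \<and> i < l \<and> x = s *\<^sub>R h i" if x: "x \<in> Rsh" for x
  proof -
    obtain i where "i < l" "h i = x \<or> h i = - x"
      using P(2) x h by (auto simp: bij_betw_def)
    then show ?thesis by (intro exI[of _ "if h i = x then 1 else -1"] exI[of _ i]) auto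
  qed
  have signed_short: "s *\<^sub>R h i \<in> Rsh" if "s \<in> {1, -1}" "i < l" for s :: real and i
  proof -
    have "h i \<in> Rsh" using hP[OF that(2)] P(1) by blast
    then show ?thesis using that(1) short_roots_neg by auto
  qed
  have ne_iff: "t *\<^sub>R h j \<noteq> s *\<^sub>R h i \<and> t *\<^sub>R h j \<noteq> - (s *\<^sub>R h i) \<longleftrightarrow> i \<noteq> j"
    if "s \<in> {1, -1}" "t \<in> {1, -1}" "i < l" "j < l" for s t :: real and i j
  proof -
    have "h j \<noteq> h i \<and> h j \<noteq> - h i" if "i \<noteq> j"
    proof
      show "h j \<noteq> h i" using h \<open>i < l\<close> \<open>j < l\<close> that by (auto simp: bij_betw_def inj_on_def)
      show "h j \<noteq> - h i" using P(3) hP[OF \<open>i < l\<close>] hP[OF \<open>j < l\<close>] by auto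
    qed
    then show ?thesis using that by (cases "i = j") (auto simp: minus_equation_iff)
  qed
  have "independent P"
  proof (rule orthogonal_independent)
    show "P \<subseteq> Rd - {0}" using P(1) short_roots_subset by blast
    fix x y assume xy: "x \<in> P" "y \<in> P" "x \<noteq> y"
    then have "y \<noteq> - x" using P(3) by auto
    then show "B x y = 0" using short_orthogonal P(1) xy by blast
  qed
  then have "independent (h ` {..<l})" using h by (simp add: bij_betw_def)
  show ?thesis
    by (rule that[of h l]) (use h \<open>independent (h ` {..<l})\<close> short_rep signed_short ne_iff in
      \<open>auto simp: bij_betw_def\<close>)
qed

lemma type_B_if_long_roots:
  assumes long: "Rlg \<noteq> {}"
  shows "type_B Rd"
proof (rule short_roots_signed_basis)
  fix h :: "nat \<Rightarrow> 'a" and l :: nat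
  assume h: "inj_on h {..<l}" "independent (h ` {..<l})"
    and short_rep: "\<And>x. x \<in> Rsh \<Longrightarrow> \<exists>s i. s \<in> {1, -1} \<and> i < l \<and> x = s *\<^sub>R h i"
    and signed_short: "\<And>s i. s \<in> {1, -1} \<Longrightarrow> i < l \<Longrightarrow> s *\<^sub>R h i \<in> Rsh"
    and ne_iff: "\<And>s t i j. s \<in> {1, -1} \<Longrightarrow> t \<in> {1, -1} \<Longrightarrow> i < l \<Longrightarrow> j < l \<Longrightarrow>
      t *\<^sub>R h j \<noteq> s *\<^sub>R h i \<and> t *\<^sub>R h j \<noteq> - (s *\<^sub>R h i) \<longleftrightarrow> i \<noteq> j"
  have pair_rep: "\<exists>s t i j. s \<in> {1, -1} \<and> t \<in> {1, -1} \<and> i < l \<and> j < l \<and> i \<noteq> j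
      \<and> x + y = s *\<^sub>R h i + t *\<^sub>R h j"
    if xy: "x \<in> Rsh" "y \<in> Rsh" "y \<noteq> x" "y \<noteq> - x" for x y
  proof -
    obtain s i where si: "s \<in> {1, -1}" "i < l" "x = s *\<^sub>R h i" using short_rep xy(1) by blast
    obtain t j where tj: "t \<in> {1, -1}" "j < l" "y = t *\<^sub>R h j" using short_rep xy(2) by blast
    have "i \<noteq> j" using ne_iff[OF si(1) tj(1) si(2) tj(2)] si(3) tj(3) xy(3,4) by blast
    then show ?thesis using si tj by blast
  qed
  have "2 \<le> l"
  proof -
    obtain b where "b \<in> Rlg" using long by blast
    then obtain x y where "x \<in> Rsh" "y \<in> Rsh" "y \<noteq> x" "y \<noteq> - x"
      using long_root_short_sum by blast
    then obtain i j where "i < l" "j < l" "i \<noteq> j" using pair_rep by blast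
    then have "{i, j} \<subseteq> {..<l}" "card {i, j} = 2" by auto
    then show ?thesis using card_mono[of "{..<l}" "{i, j}"] by simp
  qed
  moreover have "Rd = {0} \<union> {s *\<^sub>R h i | s i. s \<in> {1, -1} \<and> i < l}
      \<union> {s *\<^sub>R h i + t *\<^sub>R h j | s t i j. s \<in> {1, -1} \<and> t \<in> {1, -1} \<and> i < l \<and> j < l \<and> i \<noteq> j}"
    (is "Rd = ?D")
  proof
    show "Rd \<subseteq> ?D"
    proof
      fix r assume r: "r \<in> Rd"
      consider "r = 0" | "r \<in> Rsh" | "r \<in> Rlg" using r short_long_cover by blast
      then show "r \<in> ?D"
      proof cases
        case 3
        then obtain x y where "x \<in> Rsh" "y \<in> Rsh" "y \<noteq> x" "y \<noteq> - x" "r = x + y"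
          using long_root_short_sum by blast
        then show ?thesis using pair_rep by blast
      qed (use short_rep in blast)+
    qed
    show "?D \<subseteq> Rd"
    proof
      fix r assume "r \<in> ?D"
      then consider "r = 0" | s i where "s \<in> {1, -1}" "i < l" "r = s *\<^sub>R h i"
        | s t i j where "s \<in> {1, -1}" "t \<in> {1, -1}" "i < l" "j < l" "i \<noteq> j"
          "r = s *\<^sub>R h i + t *\<^sub>R h j"
        by blast
      then show "r \<in> Rd"
      proof cases
        case 1
        then show ?thesis using zero_root by simp
      next
        case 2
        then show ?thesis using signed_short short_roots_subset by blast
      next
        case (3 s t i j)
        then have "s *\<^sub>R h i \<noteq> t *\<^sub>R h j" "s *\<^sub>R h i \<noteq> - (t *\<^sub>R h j)"
          using ne_iff[of s t i j] by (auto simp: minus_equation_iff)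
        then show ?thesis
          using short_sum_root[OF signed_short signed_short] 3 by blast
      qed
    qed
  qed
  ultimately show "type_B Rd"
    unfolding type_B_def using h by (intro exI[of _ l] exI[of _ h]) auto
qed

end

lemma (in irreducible_rs) obtuse_short_pair_if_not_A1_B:
  assumes "\<not> type_A1 Rd" "\<not> type_B Rd"
  obtains a b where "a \<in> Rsh" "b \<in> Rsh" "b \<noteq> a" "b \<noteq> - a" "B a b < 0"
proof -
  have "\<not> short_orthogonal_rs B Rd"
    using short_orthogonal_rs.type_A1_if_no_long_roots short_orthogonal_rs.type_B_if_long_roots
      assms by blast
  then obtain a b where ab: "a \<in> Rsh" "b \<in> Rsh" "b \<noteq> a" "b \<noteq> - a" "B a b \<noteq> 0"
    unfolding short_orthogonal_rs_def short_orthogonal_rs_axioms_def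
    using irreducible_rs_axioms by blast
  then show ?thesis
    using that[OF ab(1,2,3,4)] that[OF ab(1) short_roots_neg[OF ab(2)]] by (force simp: B_simps)
qed

section \<open>Extended affine root systems R(Rd, S, L)\<close>

locale ears_rsl = finite_rs B Rd
  for B :: "'a::euclidean_space \<Rightarrow> 'a \<Rightarrow> real" and Rd :: "'a set" +
  fixes R S L :: "'a set"
  assumes ears: "ears B R"
    and roots_sub: "Rd \<subseteq> R"
    and semilattice_S: "semilattice S" and S_V0: "S \<subseteq> V0 B R"
    and semilattice_L: "semilattice L" and L_V0: "L \<subseteq> V0 B R"
    and R_eq: "R = RSL B Rd S L"
    and R0_eq: "R0 B R = msum S S"
begin

abbreviation "V \<equiv> V0 B R"

lemma ears_neg:
  assumes "x \<in> R"
  shows "- x \<in> R"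
proof -
  have "uminus ` R = R" using ears unfolding ears_def by (elim conjE) assumption
  then show ?thesis using imageI[OF assms, of uminus] by simp
qed

lemma ears_double_notin: "a \<in> Rx B R \<Longrightarrow> 2 *\<^sub>R a \<notin> R"
  using ears unfolding ears_def by (elim conjE) blast

lemma ears_discrete: "discrete_set R"
  using ears unfolding ears_def by (elim conjE) assumption

lemma ears_string:
  "a \<in> Rx B R \<Longrightarrow> b \<in> R \<Longrightarrow> \<exists>d u :: nat.
     {k::int. b + of_int k *\<^sub>R a \<in> R} = {- int d .. int u} \<and> 2 * B b a / B a a = real d - real u"
  using ears unfolding ears_def by (elim conjE) blast

lemma ears_nonisolated: "s \<in> R0 B R \<Longrightarrow> \<exists>a\<in>Rx B R. a + s \<in> R"
  using ears unfolding ears_def by (elim conjE) blast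

lemma ears_connected:
  assumes "A \<noteq> {}" "C \<noteq> {}" "A \<union> C = Rx B R" "\<forall>a\<in>A. \<forall>c\<in>C. B a c = 0"
  shows False
proof -
  have "\<not> (\<exists>A C. A \<noteq> {} \<and> C \<noteq> {} \<and> A \<union> C = Rx B R \<and> (\<forall>a\<in>A. \<forall>c\<in>C. B a c = 0))"
    using ears unfolding ears_def by (elim conjE) assumption
  then show False using assms by blast
qed

lemma V_radical: "v \<in> V \<Longrightarrow> B v x = 0"
proof -
  let ?P = "{v. \<forall>x. B v x = 0}"
  have "subspace ?P" unfolding subspace_def by (auto simp: B_simps)
  moreover have "R0 B R \<subseteq> ?P"
    using psd_form_isotropic[OF form] unfolding R0_def Rx_def by auto
  ultimately have "V \<subseteq> ?P" unfolding V0_def by (rule span_minimal[rotated])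
  then show "v \<in> V \<Longrightarrow> B v x = 0" by blast
qed

lemma V_radical': "v \<in> V \<Longrightarrow> B x v = 0"
  using V_radical B_sym by metis

lemma V_add: "v \<in> V \<Longrightarrow> w \<in> V \<Longrightarrow> v + w \<in> V"
  unfolding V0_def by (rule span_add)

lemma V_diff: "v \<in> V \<Longrightarrow> w \<in> V \<Longrightarrow> v - w \<in> V"
  unfolding V0_def by (rule span_diff)

lemma V_0: "0 \<in> V"
  unfolding V0_def by (rule span_zero)

lemma B_shift: "v \<in> V \<Longrightarrow> w \<in> V \<Longrightarrow> B (a + v) (b + w) = B a b"
  by (simp add: B_simps V_radical V_radical')

lemma roots_V_eq: "a \<in> Rd \<Longrightarrow> b \<in> Rd \<Longrightarrow> a - b \<in> V \<Longrightarrow> a = b"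
  using B_pos_span[of "a - b"] V_radical[of "a - b"] by (force simp: span_diff span_base)

lemma span_roots_inter_V: "x \<in> span Rd \<Longrightarrow> x \<in> V \<Longrightarrow> x = 0"
  using B_pos_span V_radical by fastforce

lemma msum_S_S_V: "msum S S \<subseteq> V"
  using S_V0 V_add unfolding msum_def by blast

lemma Rx_notin_V: "x \<in> Rx B R \<Longrightarrow> x \<notin> V"
  unfolding Rx_def using V_radical by auto

lemma Rx_eq: "Rx B R = R - msum S S"
  using R0_eq msum_S_S_V Rx_notin_V unfolding R0_def Rx_def by blast

lemma Rx_cases:
  assumes "r \<in> Rx B R"
  shows "(\<exists>a\<in>Rsh. \<exists>s\<in>S. r = a + s) \<or> (\<exists>a\<in>Rlg. \<exists>l\<in>L. r = a + l)"
  using assms R_eq unfolding Rx_eq RSL_def msum_def by blast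

lemma Rx_decomp:
  assumes "r \<in> Rx B R"
  obtains a v where "a \<in> Rd - {0}" "v \<in> V" "r = a + v"
  using Rx_cases[OF assms] short_roots_subset long_roots_subset S_V0 L_V0 by blast

lemma Rx_translate:
  assumes "a \<in> Rd - {0}" "v \<in> V" "a + v \<in> R"
  shows "a + v \<in> Rx B R"
  using B_shift[OF assms(2,2), of a a] root_pos[OF assms(1)] assms(3) unfolding Rx_def by simp

lemma roots_Rx: "a \<in> Rd - {0} \<Longrightarrow> a \<in> Rx B R"
  using Rx_translate[of a 0] roots_sub V_0 by auto

lemma short_translate_S:
  assumes g: "g \<in> Rsh" and v: "v \<in> V" and gv: "g + v \<in> R"
  shows "v \<in> S"
proof -
  have g0: "g \<in> Rd - {0}" using g short_roots_subset by blast
  have "g + v \<in> Rx B R" using Rx_translate[OF g0 v gv] .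
  then consider a s where "a \<in> Rsh" "s \<in> S" "g + v = a + s"
    | a l where "a \<in> Rlg" "l \<in> L" "g + v = a + l"
    using Rx_cases by blast
  then show ?thesis
  proof cases
    case 1
    have "g - a = (g + v) - (a + v)" by simp
    also have "\<dots> = s - v" using 1 by simp
    finally have "g - a \<in> V" using 1 v S_V0 V_diff[of s v] by auto
    then show ?thesis using 1 roots_V_eq[of g a] g0 short_roots_subset by auto
  next
    case 2
    have "g - a = (g + v) - (a + v)" by simp
    also have "\<dots> = l - v" using 2 by simp
    finally have "g - a \<in> V" using 2 v L_V0 V_diff[of l v] by auto
    then have "g = a" using 2 roots_V_eq[of g a] g0 long_roots_subset by auto
    then show ?thesis using 2 g short_long_disjoint by blast
  qed
qed

lemma root_add_if_obtuse:
  assumes a: "a \<in> Rx B R" and b: "b \<in> R" and neg: "B b a < 0"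
  shows "b + a \<in> R"
proof -
  obtain d u :: nat where du: "{k::int. b + of_int k *\<^sub>R a \<in> R} = {- int d .. int u}"
    "2 * B b a / B a a = real d - real u"
    using ears_string[OF a b] by blast
  have "B a a \<noteq> 0" using a unfolding Rx_def by auto
  then have "B a a > 0" using form unfolding psd_form_def by (metis order_less_le)
  then have "2 * B b a / B a a < 0" using neg by (simp add: divide_neg_pos)
  then have "(1::int) \<in> {- int d .. int u}" using du(2) by simp
  then show ?thesis using du(1) by force
qed

lemma roots_nonzero: "Rd - {0} \<noteq> {}"
proof
  assume "Rd - {0} = {}"
  moreover have "0 \<in> R0 B R" using semilattice_0[OF semilattice_S] R0_eq unfolding msum_def by force
  then obtain a where "a \<in> Rx B R" using ears_nonisolated by blast
  ultimately show False using Rx_decomp by blast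
qed

text \<open>An orthogonal splitting of the finite root system lifts, through the decomposition
  of R^x into translates of its nonzero roots, to one of R^x.\<close>
lemma roots_irreducible:
  assumes cover: "A0 \<union> C0 = Rd - {0}" and orth: "\<And>a c. a \<in> A0 \<Longrightarrow> c \<in> C0 \<Longrightarrow> B a c = 0"
  shows "A0 = {} \<or> C0 = {}"
proof (rule ccontr)
  assume "\<not> (A0 = {} \<or> C0 = {})"
  then obtain a0 c0 where a0: "a0 \<in> A0" and c0: "c0 \<in> C0" by blast
  define A where "A = {r \<in> Rx B R. \<exists>g\<in>A0. r - g \<in> V}"
  define C where "C = {r \<in> Rx B R. \<exists>g\<in>C0. r - g \<in> V}"
  have "a0 \<in> Rx B R" "c0 \<in> Rx B R" using a0 c0 cover roots_Rx by blast+
  then have "a0 \<in> A" "c0 \<in> C" using a0 c0 V_0 unfolding A_def C_def by force+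
  moreover have "A \<union> C = Rx B R"
  proof
    show "Rx B R \<subseteq> A \<union> C"
    proof
      fix r assume r: "r \<in> Rx B R"
      then obtain g v where g: "g \<in> Rd - {0}" "v \<in> V" "r = g + v" by (rule Rx_decomp)
      then have "r - g \<in> V" by simp
      then show "r \<in> A \<union> C" using cover r g(1) unfolding A_def C_def by blast
    qed
  qed (auto simp: A_def C_def)
  moreover have "B a c = 0" if ac: "a \<in> A" "c \<in> C" for a c
  proof -
    obtain g h where "g \<in> A0" "a - g \<in> V" "h \<in> C0" "c - h \<in> V"
      using ac unfolding A_def C_def by blast
    then show ?thesis using B_shift[of "a - g" "c - h" g h] orth by simp
  qed
  ultimately show False using ears_connected[of A C] by blast
qed

sublocale irreducible_rs B Rd
  using roots_nonzero roots_irreducible by unfold_locales blast+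

lemma long_translates_S:
  assumes "Rlg \<noteq> {}"
  shows "L \<subseteq> S"
proof
  fix l assume l: "l \<in> L"
  obtain a b where ab: "a \<in> Rsh" "b \<in> Rlg" "B a b < 0"
    using obtuse_short_long[OF assms] by blast
  have a0: "a \<in> Rd - {0}" and b0: "b \<in> Rd - {0}"
    using ab short_roots_subset long_roots_subset by auto
  have lV: "l \<in> V" using l L_V0 by blast
  have "b + l \<in> R" using R_eq ab(2) l unfolding RSL_def msum_def by blast
  moreover have "B (b + l) a < 0" using B_shift[OF lV V_0, of b a] ab(3) B_sym[of b a] by simp
  ultimately have "(b + l) + a \<in> R" using root_add_if_obtuse roots_Rx[OF a0] by blast
  then have "(a + b) + l \<in> R" by (simp add: algebra_simps)
  moreover have "a + b \<in> Rsh"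
    using short_obtuse_sum[OF ab(1) b0] long_ne_short[OF ab(2,1)] ab(3) by blast
  ultimately show "l \<in> S" using short_translate_S lV by blast
qed

text \<open>If a + b is a short root for short roots a, b, then (a + s) + (b + t) \<in> R for all
  s, t \<in> S, so s + t \<in> S.\<close>
lemma S_add_closed_if_obtuse_short:
  assumes a: "a \<in> Rsh" and b: "b \<in> Rsh" "b \<noteq> a" "b \<noteq> - a" and neg: "B a b < 0"
  shows "\<forall>s\<in>S. \<forall>t\<in>S. s + t \<in> S"
proof (intro ballI)
  fix s t assume s: "s \<in> S" and t: "t \<in> S"
  have a0: "a \<in> Rd - {0}" using a short_roots_subset by blast
  have b0: "b \<in> Rd - {0}" using b short_roots_subset by blast
  have sV: "s \<in> V" and tV: "t \<in> V" using s t S_V0 by auto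
  have "a + s \<in> R" "b + t \<in> R" using R_eq a b s t unfolding RSL_def msum_def by blast+
  moreover have "B (b + t) (a + s) < 0" using B_shift[OF tV sV, of b a] neg B_sym[of b a] by simp
  ultimately have "(b + t) + (a + s) \<in> R"
    using root_add_if_obtuse Rx_translate[OF a0 sV] by blast
  then have "(a + b) + (s + t) \<in> R" by (simp add: algebra_simps)
  moreover have "a + b \<in> Rsh" using short_obtuse_sum[OF a b0 b(2,3) neg] .
  ultimately show "s + t \<in> S" using short_translate_S V_add[OF sV tV] by blast
qed

lemma S_add_closed_if_not_A1_B:
  assumes "\<not> type_A1 Rd" "\<not> type_B Rd"
  shows "\<forall>s\<in>S. \<forall>t\<in>S. s + t \<in> S"
  using obtuse_short_pair_if_not_A1_B[OF assms] S_add_closed_if_obtuse_short by metis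

lemma S_add_closed_or_full_index_split:
  assumes "(\<not> type_A1 Rd \<and> \<not> type_B Rd) \<or> is_lattice S \<or> sl_ind S = zrank (zspan S)
    \<or> (\<exists>\<Lambda>1 \<Lambda>2 S1. fg_lattice \<Lambda>2 \<and> \<Lambda>1 \<inter> \<Lambda>2 = {0} \<and> semilattice S1 \<and> zspan S1 = \<Lambda>1
         \<and> S = msum S1 \<Lambda>2 \<and> sl_ind S1 = zrank \<Lambda>1)"
  shows "(\<forall>s\<in>S. \<forall>t\<in>S. s + t \<in> S) \<or> full_index_split S"
  using assms
proof (elim disjE exE conjE)
  assume "is_lattice S"
  then show ?thesis unfolding is_lattice_def by (metis zspan_add)
next
  assume "sl_ind S = zrank (zspan S)"
  then show ?thesis using full_index_split_self[OF semilattice_S] by blast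
next
  fix \<Lambda>1 \<Lambda>2 S1
  assume "fg_lattice \<Lambda>2" "\<Lambda>1 \<inter> \<Lambda>2 = {0}" "semilattice S1" "zspan S1 = \<Lambda>1" "S = msum S1 \<Lambda>2"
    "sl_ind S1 = zrank \<Lambda>1"
  then show ?thesis unfolding full_index_split_def fg_lattice_def by blast
qed (use S_add_closed_if_not_A1_B in blast)

end

section \<open>The subsystem generated by T\<close>

locale tilde_subsystem = ears_rsl +
  fixes T :: "'a set"
  assumes T_Rx: "T \<subseteq> Rx B R" and roots_T: "Rd - {0} \<subseteq> T"
begin

definition "W = zspan T"
definition "S' = S \<inter> W"
definition "L' = L \<inter> W"
definition "X = W \<inter> Rx B R"
definition "R' = X \<union> msum S' S'"

lemma subgrp_W: "subgrp W"
  unfolding W_def by (rule subgrp_zspan)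

lemma roots_W: "a \<in> Rd \<Longrightarrow> a \<in> W"
  unfolding W_def using roots_T zspan_superset[of T] zspan_0 by (cases "a = 0") auto

lemma S'_0: "0 \<in> S'"
  unfolding S'_def using semilattice_0[OF semilattice_S] subgrp_0[OF subgrp_W] by blast

lemma L'_0: "0 \<in> L'"
  unfolding L'_def using semilattice_0[OF semilattice_L] subgrp_0[OF subgrp_W] by blast

lemma S'_neg: "s \<in> S' \<Longrightarrow> - s \<in> S'"
  unfolding S'_def using semilattice_neg[OF semilattice_S] subgrp_neg[OF subgrp_W] by blast

lemma S'_V: "S' \<subseteq> V"
  unfolding S'_def using S_V0 by blast

lemma msum_S'_V: "msum S' S' \<subseteq> V"
  using S'_V V_add unfolding msum_def by blast

lemma X_notin_V: "x \<in> X \<Longrightarrow> x \<notin> V"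
  unfolding X_def using Rx_notin_V by blast

lemma X_eq: "X = msum Rsh S' \<union> msum Rlg L'"
proof
  show "X \<subseteq> msum Rsh S' \<union> msum Rlg L'"
  proof
    fix x assume x: "x \<in> X"
    then have xW: "x \<in> W" and xR: "x \<in> Rx B R" unfolding X_def by auto
    have "x - a \<in> W" if "a \<in> Rd" for a
      using subgrp_diff[OF subgrp_W xW roots_W[OF that]] .
    then show "x \<in> msum Rsh S' \<union> msum Rlg L'"
      using Rx_cases[OF xR] short_roots_subset long_roots_subset
      unfolding msum_def S'_def L'_def by fastforce
  qed
  show "msum Rsh S' \<union> msum Rlg L' \<subseteq> X"
  proof
    fix x assume "x \<in> msum Rsh S' \<union> msum Rlg L'"
    then obtain a s where as: "a \<in> Rd - {0}" "s \<in> V" "s \<in> W" "x = a + s" "x \<in> R"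
      using R_eq short_roots_subset long_roots_subset S_V0 L_V0
      unfolding msum_def S'_def L'_def RSL_def by blast
    then have "x \<in> Rx B R" using Rx_translate by blast
    moreover have "x \<in> W" using as roots_W subgrp_add[OF subgrp_W] by blast
    ultimately show "x \<in> X" unfolding X_def by blast
  qed
qed

lemma X_decomp:
  assumes "x \<in> X"
  obtains g s where "g \<in> Rd - {0}" "s \<in> S'" "x = g + s"
proof -
  have "L' \<subseteq> S'" if "Rlg \<noteq> {}"
    using long_translates_S[OF that] unfolding L'_def S'_def by blast
  then show ?thesis
    using assms that short_roots_subset long_roots_subset unfolding X_eq msum_def by blast
qed

lemma roots_X: "a \<in> Rd - {0} \<Longrightarrow> a \<in> X"
  unfolding X_def using roots_W roots_Rx by blast

lemma tildeR_eq: "tildeR B R T = R'"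
proof -
  have "V \<inter> mdiff X X = msum S' S'"
  proof
    show "V \<inter> mdiff X X \<subseteq> msum S' S'"
    proof
      fix z assume z: "z \<in> V \<inter> mdiff X X"
      then obtain x y where xy: "x \<in> X" "y \<in> X" "z = x - y" unfolding mdiff_def by blast
      obtain g s where gs: "g \<in> Rd - {0}" "s \<in> S'" "x = g + s" using X_decomp[OF xy(1)] .
      obtain h t where ht: "h \<in> Rd - {0}" "t \<in> S'" "y = h + t" using X_decomp[OF xy(2)] .
      have "g - h = z - s + t" using xy(3) gs(3) ht(3) by (simp add: algebra_simps)
      also have "\<dots> \<in> V" using z gs(2) ht(2) S'_V V_diff V_add by blast
      finally have "g = h" using roots_V_eq gs(1) ht(1) by blast
      then have "z = s + (- t)" using xy(3) gs(3) ht(3) by simp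
      then show "z \<in> msum S' S'" using gs(2) S'_neg[OF ht(2)] unfolding msum_def by blast
    qed
    show "msum S' S' \<subseteq> V \<inter> mdiff X X"
    proof
      fix z assume z: "z \<in> msum S' S'"
      then obtain s t where st: "s \<in> S'" "t \<in> S'" "z = s + t" unfolding msum_def by blast
      obtain a where a: "a \<in> Rsh" using short_roots_nonempty by blast
      have "a + s \<in> X" "a + (- t) \<in> X" unfolding X_eq msum_def using a st S'_neg by blast+
      moreover have "z = (a + s) - (a + (- t))" using st by simp
      ultimately show "z \<in> V \<inter> mdiff X X" using z msum_S'_V unfolding mdiff_def by blast
    qed
  qed
  then show ?thesis unfolding tildeR_def R'_def X_def W_def by (simp add: Let_def)
qed

lemma R'_RSL: "R' = RSL B Rd S' L'"
  unfolding R'_def RSL_def X_eq by blast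

lemma R'_subset: "R' \<subseteq> R"
proof -
  have "msum S' S' \<subseteq> msum S S" unfolding S'_def msum_def by blast
  moreover have "msum S S \<subseteq> R" using R_eq unfolding RSL_def by blast
  ultimately show ?thesis unfolding R'_def X_def Rx_def by blast
qed

lemma R'_W: "R' \<subseteq> W"
  unfolding R'_def X_def msum_def S'_def using subgrp_add[OF subgrp_W] by blast

lemma Rx_R': "Rx B R' = X"
  using R'_subset msum_S'_V V_radical unfolding Rx_def R'_def X_def by auto

lemma R'_neg:
  assumes x: "x \<in> R'"
  shows "- x \<in> R'"
proof (cases "x \<in> X")
  case True
  then have "x \<in> W" "x \<in> R" "B x x \<noteq> 0" unfolding X_def Rx_def by auto
  then have "- x \<in> X"
    using subgrp_neg[OF subgrp_W] ears_neg unfolding X_def Rx_def by (simp add: B_simps)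
  then show ?thesis unfolding R'_def by blast
next
  case False
  then obtain s t where "s \<in> S'" "t \<in> S'" "x = s + t" using x unfolding R'_def msum_def by blast
  then have "- x = (- s) + (- t)" "- s \<in> S'" "- t \<in> S'" using S'_neg by simp_all
  then show ?thesis unfolding R'_def msum_def by blast
qed

lemma X_sum_in_V:
  assumes a: "a \<in> X" and b: "b \<in> X" and ab: "a + b \<in> V"
  shows "a + b \<in> msum S' S'"
proof -
  obtain g s where gs: "g \<in> Rd - {0}" "s \<in> S'" "a = g + s" using X_decomp[OF a] .
  obtain h t where ht: "h \<in> Rd - {0}" "t \<in> S'" "b = h + t" using X_decomp[OF b] .
  have "g - (- h) = (a + b) - s - t" using gs(3) ht(3) by (simp add: algebra_simps)
  also have "\<dots> \<in> V" using ab gs(2) ht(2) S'_V V_diff by blast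
  finally have "g = - h" using roots_V_eq gs(1) root_neg ht(1) by blast
  then have "a + b = s + t" using gs(3) ht(3) by simp
  then show ?thesis using gs(2) ht(2) unfolding msum_def by blast
qed

lemma R'_closed:
  assumes sums: "msum S S \<inter> zspan S' \<subseteq> msum S' S'"
    and a: "a \<in> R'" and b: "b \<in> R'" and ab: "a + b \<in> R"
  shows "a + b \<in> R'"
proof (cases "a + b \<in> Rx B R")
  case True
  then show ?thesis using R'_W a b subgrp_add[OF subgrp_W] unfolding R'_def X_def by blast
next
  case False
  then have abS: "a + b \<in> msum S S" using ab Rx_eq by blast
  then have abV: "a + b \<in> V" using msum_S_S_V by blast
  have V_if_notin_X: "x \<in> V" if "x \<in> R'" "x \<notin> X" for x
    using that msum_S'_V unfolding R'_def by blast
  consider "a \<in> X" "b \<in> X" | "a \<notin> X" "b \<notin> X" | "a \<in> X \<longleftrightarrow> b \<notin> X" by blast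
  then show ?thesis
  proof cases
    case 1
    then show ?thesis using X_sum_in_V abV unfolding R'_def by blast
  next
    case 2
    then have "a \<in> msum S' S'" "b \<in> msum S' S'" using a b unfolding R'_def by auto
    then have "a + b \<in> zspan S'"
      using zspan_superset[of S'] unfolding msum_def by (blast intro: zspan_add)
    then show ?thesis using sums abS unfolding R'_def by blast
  next
    case 3
    then have "a \<in> V \<or> b \<in> V" using V_if_notin_X a b by blast
    then have "a \<in> V \<and> b \<in> V"
      using abV V_diff[OF abV] by (metis add_diff_cancel_left' add_diff_cancel_right')
    then show ?thesis using 3 X_notin_V by blast
  qed
qed

lemma X_multiple_in_V:
  assumes a: "a \<in> X" and b: "b \<in> X" and k: "b + of_int k *\<^sub>R a \<in> V"
  shows "k = 1 \<or> k = -1"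
proof -
  obtain g s where gs: "g \<in> Rd - {0}" "s \<in> S'" "a = g + s" using X_decomp[OF a] .
  obtain h t where ht: "h \<in> Rd - {0}" "t \<in> S'" "b = h + t" using X_decomp[OF b] .
  have "h + of_int k *\<^sub>R g = (b + of_int k *\<^sub>R a) - (t + of_int k *\<^sub>R s)"
    using gs(3) ht(3) by (simp add: algebra_simps)
  also have "\<dots> \<in> V"
  proof -
    have "t \<in> V" "s \<in> V" using gs(2) ht(2) S'_V by auto
    then have "t + of_int k *\<^sub>R s \<in> V" unfolding V0_def by (intro span_add span_scale)
    then show ?thesis using k V_diff by blast
  qed
  finally have "h + of_int k *\<^sub>R g \<in> V" .
  moreover have "h + of_int k *\<^sub>R g \<in> span Rd"
    using gs(1) ht(1) by (intro span_add span_scale span_base) auto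
  ultimately have "h = (- of_int k) *\<^sub>R g"
    using span_roots_inter_V by (simp add: eq_neg_iff_add_eq_0)
  then have "(- of_int k :: real) = 1 \<or> (- of_int k :: real) = -1"
    using red gs(1) ht(1) unfolding reduced_rs_def by metis
  then show ?thesis by linarith
qed

lemma R'_string:
  assumes sums: "msum S S \<inter> zspan S' \<subseteq> msum S' S'"
    and a: "a \<in> X" and b: "b \<in> R'" and k: "b + of_int k *\<^sub>R a \<in> R"
  shows "b + of_int k *\<^sub>R a \<in> R'"
proof (cases "b + of_int k *\<^sub>R a \<in> Rx B R")
  case True
  have "a \<in> W" "b \<in> W" using a b R'_W unfolding R'_def by auto
  then have "b + of_int k *\<^sub>R a \<in> W"
    using subgrp_add[OF subgrp_W] subgrp_scaleR_int[OF subgrp_W] by blast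
  then show ?thesis using True unfolding R'_def X_def by blast
next
  case False
  then have kV: "b + of_int k *\<^sub>R a \<in> V" using k Rx_eq msum_S_S_V by blast
  have aR': "a \<in> R'" using a unfolding R'_def by blast
  show ?thesis
  proof (cases "b \<in> X")
    case False
    then have "b \<in> V" using b msum_S'_V unfolding R'_def by blast
    then have "of_int k *\<^sub>R a \<in> V" using kV V_diff[OF kV] by force
    then have "k = 0"
      using X_notin_V[OF a] span_scale[of "of_int k *\<^sub>R a" _ "1 / of_int k"]
      unfolding V0_def by (cases "k = 0") auto
    then show ?thesis using b by simp
  next
    case True
    then consider "k = 1" | "k = -1" using X_multiple_in_V[OF a True kV] by blast
    then show ?thesis
      using R'_closed[OF sums b aR'] R'_closed[OF sums b R'_neg[OF aR']] k by cases auto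
  qed
qed

lemma X_root_translate:
  assumes "x \<in> X"
  obtains g where "g \<in> Rd - {0}" "g \<in> X" "B x g \<noteq> 0"
proof -
  obtain g s where gs: "g \<in> Rd - {0}" "s \<in> S'" "x = g + s" using X_decomp[OF assms] .
  have "B x g = B g g" using B_shift[of s 0 g g] gs(2,3) S'_V V_0 by auto
  then show ?thesis using that[OF gs(1) roots_X[OF gs(1)]] root_pos[OF gs(1)] by simp
qed

text \<open>Each element of X is non-orthogonal to a nonzero root of Rd in X, so an orthogonal
  splitting of X restricts to one of the irreducible finite root system.\<close>
lemma X_connected:
  assumes AC: "A \<noteq> {}" "C \<noteq> {}" "A \<union> C = X" and orth: "\<forall>a\<in>A. \<forall>c\<in>C. B a c = 0"
  shows False
proof -
  have "A \<inter> Rd \<noteq> {}"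
  proof -
    obtain a where a: "a \<in> A" using AC(1) by blast
    then obtain g where g: "g \<in> Rd - {0}" "g \<in> X" "B a g \<noteq> 0"
      using X_root_translate AC(3) by blast
    then have "g \<notin> C" using a orth by auto
    then show ?thesis using g(1,2) AC(3) by blast
  qed
  moreover have "C \<inter> Rd \<noteq> {}"
  proof -
    obtain c where c: "c \<in> C" using AC(2) by blast
    then obtain g where g: "g \<in> Rd - {0}" "g \<in> X" "B c g \<noteq> 0"
      using X_root_translate AC(3) by blast
    then have "g \<notin> A" using c orth B_sym[of g c] by auto
    then show ?thesis using g(1,2) AC(3) by blast
  qed
  moreover have "(A \<inter> Rd) \<union> (C \<inter> Rd) = Rd - {0}"
    using AC(3) roots_X X_notin_V V_0 by blast
  ultimately show False using irreducible[of "A \<inter> Rd" "C \<inter> Rd"] orth by blast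
qed

lemma ears_R':
  assumes sums: "msum S S \<inter> zspan S' \<subseteq> msum S' S'"
  shows "ears B R'"
  unfolding ears_def
proof (intro conjI)
  show "0 \<in> R'" using S'_0 unfolding R'_def msum_def by force
  show "uminus ` R' = R'"
    using R'_neg by (metis minus_minus subsetI subset_antisym image_subset_iff imageI)
  show "\<forall>a\<in>Rx B R'. 2 *\<^sub>R a \<notin> R'"
    using ears_double_notin R'_subset unfolding Rx_R' X_def by blast
  show "discrete_set R'"
    using ears_discrete R'_subset unfolding discrete_set_def by blast
  show "\<forall>a\<in>Rx B R'. \<forall>b\<in>R'. \<exists>d u :: nat.
      {k::int. b + of_int k *\<^sub>R a \<in> R'} = {- int d .. int u} \<and> 2 * B b a / B a a = real d - real u"
  proof (intro ballI)
    fix a b assume a: "a \<in> Rx B R'" and b: "b \<in> R'"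
    then have "a \<in> Rx B R" "b \<in> R" using R'_subset unfolding Rx_R' X_def by auto
    then obtain d u :: nat where du: "{k::int. b + of_int k *\<^sub>R a \<in> R} = {- int d .. int u}"
      "2 * B b a / B a a = real d - real u" using ears_string by blast
    have "{k::int. b + of_int k *\<^sub>R a \<in> R'} = {k::int. b + of_int k *\<^sub>R a \<in> R}"
      using R'_string[OF sums _ b] a R'_subset unfolding Rx_R' by blast
    then show "\<exists>d u :: nat. {k::int. b + of_int k *\<^sub>R a \<in> R'} = {- int d .. int u}
        \<and> 2 * B b a / B a a = real d - real u" using du by blast
  qed
  show "\<forall>s\<in>R0 B R'. \<exists>a\<in>Rx B R'. a + s \<in> R'"
  proof
    fix s assume "s \<in> R0 B R'"
    then have "s \<in> R'" "s \<notin> X" unfolding R0_def Rx_R' by auto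
    then obtain s1 s2 where st: "s1 \<in> S'" "s2 \<in> S'" "s = s1 + s2"
      unfolding R'_def msum_def by blast
    obtain g where g: "g \<in> Rsh" using short_roots_nonempty by blast
    have x: "g + (- s1) \<in> X" "g + s2 \<in> X" unfolding X_eq msum_def using g st S'_neg by blast+
    moreover have "(g + (- s1)) + s = g + s2" using st(3) by simp
    ultimately have "(g + (- s1)) + s \<in> R'" unfolding R'_def by (metis UnI1)
    then show "\<exists>a\<in>Rx B R'. a + s \<in> R'" using x(1) unfolding Rx_R' by blast
  qed
  show "\<not> (\<exists>A C. A \<noteq> {} \<and> C \<noteq> {} \<and> A \<union> C = Rx B R' \<and> (\<forall>a\<in>A. \<forall>c\<in>C. B a c = 0))"
    using X_connected unfolding Rx_R' by blast
qed

lemma sums_condition: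
  assumes "(\<forall>s\<in>S. \<forall>t\<in>S. s + t \<in> S) \<or> full_index_split S"
  shows "msum S S \<inter> zspan S' \<subseteq> msum S' S'"
  using assms additive_semilattice_sums[OF semilattice_S _ subgrp_W]
    full_index_semilattice_sums[OF _ subgrp_W]
  unfolding S'_def by blast

lemma canonical_R': "canonical_sub B Rd R'"
  unfolding canonical_sub_def R'_RSL S'_def L'_def
  using semilattice_Int_subgrp[OF semilattice_S subgrp_W]
    semilattice_Int_subgrp[OF semilattice_L subgrp_W]
  by blast

end

theorem proposition7p5:
  fixes B :: "'a::euclidean_space \<Rightarrow> 'a \<Rightarrow> real"
    and R Rd S L U :: "'a set"
  assumes form: "psd_form B"
    and ears: "ears B R"
    and frs: "finite_root_system B Rd"
    and red: "reduced_rs Rd"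
    and sub: "Rd \<subseteq> R"
    and bij: "\<forall>r\<in>R. \<exists>!d. d \<in> Rd \<and> r - d \<in> V0 B R"
    and semS: "semilattice S" and SV0: "S \<subseteq> V0 B R"
    and semL: "semilattice L" and LV0: "L \<subseteq> V0 B R"
    and Rdesc: "R = RSL B Rd S L"
    and R0desc: "R0 B R = msum S S"
    and U: "subgrp U" "U \<subseteq> zspan (R0 B R)"
    and cases:
      "(\<not> type_A1 Rd \<and> \<not> type_B Rd)
       \<or> (type_A1 Rd \<and> (is_lattice S \<or> sl_ind S = zrank (zspan S)))
       \<or> (type_B Rd \<and> (is_lattice S \<or>
            (\<exists>\<Lambda>1 \<Lambda>2 S1. fg_lattice \<Lambda>1 \<and> fg_lattice \<Lambda>2 \<and> \<Lambda>1 \<inter> \<Lambda>2 = {0} \<and>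
                 zspan S = msum \<Lambda>1 \<Lambda>2 \<and> semilattice S1 \<and> zspan S1 = \<Lambda>1 \<and>
                 S = msum S1 \<Lambda>2 \<and> sl_ind S1 = zrank \<Lambda>1)))"
  defines "T \<equiv> msum Rd U \<inter> Rx B R"
  shows "subsystem B R (tildeR B R T) \<and> closed_sub R (tildeR B R T)
         \<and> canonical_sub B Rd (tildeR B R T)"
proof -
  interpret ears_rsl B Rd R S L
    using form frs red ears sub semS SV0 semL LV0 Rdesc R0desc by unfold_locales
  have "Rd - {0} \<subseteq> T"
    using roots_Rx subgrp_0[OF U(1)] unfolding T_def msum_def by force
  then interpret tilde_subsystem B Rd R S L T
    by unfold_locales (simp add: T_def)
  have "msum S S \<inter> zspan S' \<subseteq> msum S' S'"
    using cases by (intro sums_condition S_add_closed_or_full_index_split) blast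
  then show ?thesis
    using tildeR_eq R'_subset ears_R' R'_closed canonical_R'
    unfolding subsystem_def closed_sub_def by auto
qed

end
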